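(* Let $q\in\mathbb{C}$ be generic, let $\hbar,c\in\mathbb{C}$, and let $A^c_{\hbar,q}$, $K$, $\tilde v$ be as in the context. For each $k=0,1,2,\dots$ put $$\lambda_k=\frac{(q^{2k}-1)(q^{2(k+1)}-1)}{q^{2k-2}(q^2-1)^2}.$$ Then for every $k=0,1,2,\dots$ there exists a unique polynomial of the form $P_k(\tilde v)=\sum_{j=0}^{k}A^k_j\,\tilde v^{k-j}$ with $A^k_j\in\mathbb{C}$ and $A^k_0=1$ such that $K\,P_k(\tilde v)=\lambda_k\,P_k(\tilde v)$ in $A^c_{\hbar,q}$.
   Context: $U_q(sl(2))$ is the algebra generated by $E_+,E_-,X,Y$ with relations $E_{\pm}X=q^{\pm1}XE_{\pm}$, $E_{\pm}Y=q^{\mp1}YE_{\pm}$, $E_+E_-=E_-E_+=1$, $XY-YX=\frac{E_+^2-E_-^2}{q-q^{-1}}$, with coproduct $\Delta(X)=E_-\otimes X+X\otimes E_+$, $\Delta(Y)=E_-\otimes Y+Y\otimes E_+$, $\Delta(E_\pm)=E_\pm\otimes E_\pm$. The quantum Casimir is $K=\frac{q}{2}(XY+YX)+\frac{q^2(1+q^2)}{2(1-q^2)^2}(E_+^2+E_-^2-2)$. Let $\mathbf V$ be the 3-dimensional $U_q(sl(2))$-module with basis $u,v,w$ and action $E_\pm u=q^{\pm1}u$, $E_\pm v=v$, $E_\pm w=q^{\mp1}w$, $Xu=0$, $Xv=-(q+q^{-1})u$, $Xw=v$, $Yu=-v$, $Yv=(q+q^{-1})w$, $Yw=0$. The algebra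 $A^c_{\hbar,q}$ is the quotient of the tensor algebra $T(\mathbf V)$ by the two-sided ideal generated by $(q^2+1)uw+vv+\frac{q^2+1}{q^2}wu-c$, $q^2uv-vu+\hbar u$, $(q^2+1)(uw-wu)+(1-q^2)vv-\hbar v$, $-q^2vw+wv-\hbar w$. $U_q(sl(2))$ acts on $A^c_{\hbar,q}$ via the coproduct (i.e. $Z(fg)=\sum Z_{(1)}(f)Z_{(2)}(g)$ for $\Delta Z=\sum Z_{(1)}\otimes Z_{(2)}$), so $K$ acts as a linear operator on $A^c_{\hbar,q}$. Set $a=\hbar(1-q^2)^{-1}$ and $\tilde v=v-a\in A^c_{\hbar,q}$; $\tilde v^k$ is its $k$-th power in $A^c_{\hbar,q}$. "Generic $q$" means $q$ avoids a certain set of exceptional values (in particular $q\neq0$, $q^2\neq1$). *)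

theory Defs
  imports Complex_Main
begin

datatype gen = U | V | W

text \<open>Elements of T(V) are represented as coefficient functions on words
  (finite support is automatic for everything built below).\<close>
type_synonym tens = "gen list \<Rightarrow> complex"

definition tadd :: "tens \<Rightarrow> tens \<Rightarrow> tens" where
  "tadd f g = (\<lambda>w. f w + g w)"

definition tsmult :: "complex \<Rightarrow> tens \<Rightarrow> tens" where
  "tsmult c f = (\<lambda>w. c * f w)"

definition tmono :: "gen list \<Rightarrow> tens" where
  "tmono ws = (\<lambda>w. if w = ws then 1 else 0)"

definition tone :: tens where
  "tone = tmono []"

definition tmul :: "tens \<Rightarrow> tens \<Rightarrow> tens" where
  "tmul f g = (\<lambda>w. \<Sum>i\<le>length w. f (take i w) * g (drop i w))"

fun tpow :: "tens \<Rightarrow> nat \<Rightarrow> tens" where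
  "tpow f 0 = tone"
| "tpow f (Suc n) = tmul f (tpow f n)"

definition rel1 :: "complex \<Rightarrow> complex \<Rightarrow> complex \<Rightarrow> tens" where
  "rel1 q h c = tadd (tsmult (q^2 + 1) (tmono [U, W]))
     (tadd (tmono [V, V]) (tadd (tsmult ((q^2 + 1) / q^2) (tmono [W, U])) (tsmult (- c) tone)))"

definition rel2 :: "complex \<Rightarrow> complex \<Rightarrow> complex \<Rightarrow> tens" where
  "rel2 q h c = tadd (tsmult (q^2) (tmono [U, V]))
     (tadd (tsmult (-1) (tmono [V, U])) (tsmult h (tmono [U])))"

definition rel3 :: "complex \<Rightarrow> complex \<Rightarrow> complex \<Rightarrow> tens" where
  "rel3 q h c = tadd (tsmult (q^2 + 1) (tadd (tmono [U, W]) (tsmult (-1) (tmono [W, U]))))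
     (tadd (tsmult (1 - q^2) (tmono [V, V])) (tsmult (- h) (tmono [V])))"

definition rel4 :: "complex \<Rightarrow> complex \<Rightarrow> complex \<Rightarrow> tens" where
  "rel4 q h c = tadd (tsmult (- (q^2)) (tmono [V, W]))
     (tadd (tmono [W, V]) (tsmult (- h) (tmono [W])))"

definition rels :: "complex \<Rightarrow> complex \<Rightarrow> complex \<Rightarrow> tens set" where
  "rels q h c = {rel1 q h c, rel2 q h c, rel3 q h c, rel4 q h c}"

inductive_set ideal :: "complex \<Rightarrow> complex \<Rightarrow> complex \<Rightarrow> tens set"
  for q h c where
  zero: "(\<lambda>w. 0) \<in> ideal q h c"
| gen: "r \<in> rels q h c \<Longrightarrow> tmul (tmono a) (tmul r (tmono b)) \<in> ideal q h c"
| add: "x \<in> ideal q h c \<Longrightarrow> y \<in> ideal q h c \<Longrightarrow> tadd x y \<in> ideal q h c"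
| smult: "x \<in> ideal q h c \<Longrightarrow> tsmult d x \<in> ideal q h c"

text \<open>Weight: E_+ acts on a generator g by q powi wt g.\<close>
fun wt :: "gen \<Rightarrow> int" where
  "wt U = 1" | "wt V = 0" | "wt W = -1"

definition wtw :: "gen list \<Rightarrow> int" where
  "wtw ws = sum_list (map wt ws)"

fun genX :: "complex \<Rightarrow> gen \<Rightarrow> tens" where
  "genX q U = (\<lambda>w. 0)"
| "genX q V = tsmult (- (q + inverse q)) (tmono [U])"
| "genX q W = tmono [V]"

fun genY :: "complex \<Rightarrow> gen \<Rightarrow> tens" where
  "genY q U = tsmult (-1) (tmono [V])"
| "genY q V = tsmult (q + inverse q) (tmono [W])"
| "genY q W = (\<lambda>w. 0)"

text \<open>Using Delta(Z) = E_- (x) Z + Z (x) E_+ for Z = X, Y, on a word x # xs.\<close>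
fun wordX :: "complex \<Rightarrow> gen list \<Rightarrow> tens" where
  "wordX q [] = (\<lambda>w. 0)"
| "wordX q (x # xs) =
     tadd (tsmult (q powi (- wt x)) (tmul (tmono [x]) (wordX q xs)))
          (tsmult (q powi (wtw xs)) (tmul (genX q x) (tmono xs)))"

fun wordY :: "complex \<Rightarrow> gen list \<Rightarrow> tens" where
  "wordY q [] = (\<lambda>w. 0)"
| "wordY q (x # xs) =
     tadd (tsmult (q powi (- wt x)) (tmul (tmono [x]) (wordY q xs)))
          (tsmult (q powi (wtw xs)) (tmul (genY q x) (tmono xs)))"

definition lin :: "(gen list \<Rightarrow> tens) \<Rightarrow> tens \<Rightarrow> tens" where
  "lin T f = (\<lambda>w'. \<Sum>w\<in>{w. f w \<noteq> 0}. f w * T w w')"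

definition actX :: "complex \<Rightarrow> tens \<Rightarrow> tens" where
  "actX q = lin (wordX q)"

definition actY :: "complex \<Rightarrow> tens \<Rightarrow> tens" where
  "actY q = lin (wordY q)"

text \<open>E_+^2 + E_-^2 - 2 acting on a word.\<close>
definition actE :: "complex \<Rightarrow> tens \<Rightarrow> tens" where
  "actE q = lin (\<lambda>ws. tsmult (q powi (2 * wtw ws) + q powi (- 2 * wtw ws) - 2) (tmono ws))"

definition actK :: "complex \<Rightarrow> tens \<Rightarrow> tens" where
  "actK q f = tadd (tsmult (q / 2) (tadd (actX q (actY q f)) (actY q (actX q f))))
                   (tsmult (q^2 * (1 + q^2) / (2 * (1 - q^2)^2)) (actE q f))"

definition vtilde :: "complex \<Rightarrow> complex \<Rightarrow> tens" where
  "vtilde q h = tadd (tmono [V]) (tsmult (- (h / (1 - q^2))) tone)"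

definition Ppoly :: "complex \<Rightarrow> complex \<Rightarrow> nat \<Rightarrow> (nat \<Rightarrow> complex) \<Rightarrow> tens" where
  "Ppoly q h k A = (\<lambda>w. \<Sum>j\<le>k. A j * tpow (vtilde q h) (k - j) w)"

definition lam :: "complex \<Rightarrow> nat \<Rightarrow> complex" where
  "lam q k = ((q ^ (2 * k) - 1) * (q ^ (2 * (k + 1)) - 1)) /
             (q powi (2 * int k - 2) * (q^2 - 1)^2)"

definition generic_q :: "complex \<Rightarrow> bool" where
  "generic_q q \<longleftrightarrow> q \<noteq> 0 \<and> (\<forall>n::nat. n > 0 \<longrightarrow> q ^ n \<noteq> 1)"

end

theory Submission
  imports Defs "HOL-Computational_Algebra.Polynomial"
begin

text \<open>
  Modulo the relations, \<open>u\<close> and \<open>w\<close> \<open>q\<close>-commute with \<open>v\<^sup>~\<close>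
  (\<open>u v\<^sup>~ = q\<^sup>-\<^sup>2 v\<^sup>~ u\<close>, \<open>w v\<^sup>~ = q\<^sup>2 v\<^sup>~ w\<close>), and \<open>uw\<close>, \<open>wu\<close> are quadratic
  polynomials in \<open>v\<^sup>~\<close>. Through the coproduct, \<open>X\<close> and \<open>Y\<close> act as twisted derivations,
  which gives \<open>K(v\<^sup>~ x) = v\<^sup>~ K(x) - [2] u Y(x) + [2] q\<^sup>2 w X(x) + q [2] v x\<close> for \<open>x\<close> of
  weight 0, where \<open>[2] = q + q\<^sup>-\<^sup>1\<close>. By induction \<open>K(v\<^sup>~\<^sup>m)\<close> is congruent to a
  polynomial in \<open>v\<^sup>~\<close> of degree \<open>m\<close> with leading coefficient \<open>\<lambda>\<^sub>m\<close>. So for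
  \<open>P = \<Sum>\<^sub>j A\<^sub>j v\<^sup>~\<^sup>k\<^sup>-\<^sup>j\<close> the equation \<open>K P = \<lambda>\<^sub>k P\<close> is a triangular linear system for
  the \<open>A\<^sub>j\<close> with diagonal entries \<open>\<lambda>\<^sub>k\<^sub>-\<^sub>j - \<lambda>\<^sub>k\<close>, which are nonzero for generic \<open>q\<close>;
  it has exactly one solution with \<open>A\<^sub>0 = 1\<close>. This needs that no nonzero polynomial in
  \<open>v\<^sup>~\<close> lies in the ideal, which is seen on a representation of the algebra on functions
  \<open>\<int> \<Rightarrow> \<complex>\<close> where \<open>v\<^sup>~\<close> acts diagonally with the infinitely many distinct eigenvalues
  \<open>q\<^sup>2\<^sup>n\<close>.
\<close>

section \<open>Finitely supported tensors\<close>

definition fin_supp :: "tens \<Rightarrow> bool" where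
  "fin_supp f \<longleftrightarrow> finite {w. f w \<noteq> 0}"

lemma tmul_assoc: "tmul (tmul f g) h = tmul f (tmul g h)"
proof (rule ext)
  fix w :: "gen list"
  let ?n = "length w"
  define F where "F j l = f (take j w) * g (take l (drop j w)) * h (drop (j + l) w)" for j l
  have "tmul (tmul f g) h w = (\<Sum>i\<le>?n. \<Sum>j\<le>i. F j (i - j))"
    unfolding tmul_def F_def
    by (auto simp: sum_distrib_right min_def drop_take intro!: sum.cong)
  also have "\<dots> = (\<Sum>(j, l)\<in>{(j, l). j + l \<le> ?n}. F j l)"
    by (rule sum.triangle_reindex_eq[symmetric])
  also have "{(j, l). j + l \<le> ?n} = Sigma {..?n} (\<lambda>j. {..?n - j})" by auto
  also have "(\<Sum>(j, l)\<in>Sigma {..?n} (\<lambda>j. {..?n - j}). F j l) = (\<Sum>j\<le>?n. \<Sum>l\<le>?n - j. F j l)"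
    by (rule sum.Sigma[symmetric]) auto
  also have "\<dots> = tmul f (tmul g h) w"
    unfolding tmul_def F_def by (auto simp: sum_distrib_left mult.assoc add.commute intro!: sum.cong)
  finally show "tmul (tmul f g) h w = tmul f (tmul g h) w" .
qed

lemma tmul_tone_left: "tmul tone f = f"
proof (rule ext)
  fix w :: "gen list"
  have "tmul tone f w = (\<Sum>i\<le>length w. if i = 0 then f w else 0)"
    unfolding tmul_def tone_def tmono_def by (intro sum.cong) auto
  then show "tmul tone f w = f w" by simp
qed

lemma tmul_tone_right: "tmul f tone = f"
proof (rule ext)
  fix w :: "gen list"
  have "tmul f tone w = (\<Sum>i\<le>length w. if i = length w then f w else 0)"
    unfolding tmul_def tone_def tmono_def by (intro sum.cong) auto
  then show "tmul f tone w = f w" by simp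
qed

lemma tmul_tadd_left: "tmul (tadd f g) h = tadd (tmul f h) (tmul g h)"
  unfolding tmul_def tadd_def by (simp add: sum.distrib distrib_right)

lemma tmul_tadd_right: "tmul h (tadd f g) = tadd (tmul h f) (tmul h g)"
  unfolding tmul_def tadd_def by (simp add: sum.distrib distrib_left)

lemma tmul_tsmult_left: "tmul (tsmult c f) g = tsmult c (tmul f g)"
  unfolding tmul_def tsmult_def by (simp add: sum_distrib_left mult.assoc)

lemma tmul_tsmult_right: "tmul g (tsmult c f) = tsmult c (tmul g f)"
  unfolding tmul_def tsmult_def by (simp add: sum_distrib_left mult.left_commute)

lemma tmul_zero_left: "tmul (\<lambda>w. 0) f = (\<lambda>w. 0)"
  unfolding tmul_def by simp

lemma tmul_zero_right: "tmul f (\<lambda>w. 0) = (\<lambda>w. 0)"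
  unfolding tmul_def by simp

lemma tmul_tmono: "tmul (tmono a) (tmono b) = tmono (a @ b)"
proof (rule ext)
  fix w :: "gen list"
  have "tmul (tmono a) (tmono b) w = (\<Sum>i\<le>length w. if i = length a \<and> w = a @ b then 1 else 0)"
    unfolding tmul_def tmono_def by (intro sum.cong) (auto simp: append_eq_conv_conj)
  also have "\<dots> = tmono (a @ b) w"
    unfolding tmono_def by (auto simp: sum.delta)
  finally show "tmul (tmono a) (tmono b) w = tmono (a @ b) w" .
qed

lemma fin_supp_tmul: "fin_supp f \<Longrightarrow> fin_supp g \<Longrightarrow> fin_supp (tmul f g)"
proof -
  assume "fin_supp f" "fin_supp g"
  have "{w. tmul f g w \<noteq> 0} \<subseteq> (\<lambda>(a, b). a @ b) ` ({w. f w \<noteq> 0} \<times> {w. g w \<noteq> 0})"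
  proof
    fix w assume "w \<in> {w. tmul f g w \<noteq> 0}"
    then obtain i where "f (take i w) * g (drop i w) \<noteq> 0"
      unfolding tmul_def by (auto elim: sum.not_neutral_contains_not_neutral)
    then show "w \<in> (\<lambda>(a, b). a @ b) ` ({w. f w \<noteq> 0} \<times> {w. g w \<noteq> 0})"
      by (auto intro!: image_eqI[where x = "(take i w, drop i w)"])
  qed
  then show ?thesis
    using \<open>fin_supp f\<close> \<open>fin_supp g\<close> unfolding fin_supp_def by (auto intro: finite_subset)
qed

lemma fin_supp_tadd: "fin_supp f \<Longrightarrow> fin_supp g \<Longrightarrow> fin_supp (tadd f g)"
  unfolding fin_supp_def tadd_def
  by (rule finite_subset[of _ "{w. f w \<noteq> 0} \<union> {w. g w \<noteq> 0}"]) auto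

lemma fin_supp_tsmult: "fin_supp f \<Longrightarrow> fin_supp (tsmult c f)"
  unfolding fin_supp_def tsmult_def by (rule finite_subset[of _ "{w. f w \<noteq> 0}"]) auto

lemma fin_supp_tmono: "fin_supp (tmono ws)"
  unfolding fin_supp_def tmono_def by (rule finite_subset[of _ "{ws}"]) auto

lemma fin_supp_zero: "fin_supp (\<lambda>w. 0)"
  unfolding fin_supp_def by simp

typedef talg = "{f :: tens. fin_supp f}"
  by (rule exI[of _ "\<lambda>_. 0"]) (simp add: fin_supp_zero)

setup_lifting type_definition_talg

instantiation talg :: ring_1
begin

lift_definition zero_talg :: talg is "\<lambda>w. 0" by (rule fin_supp_zero)
lift_definition one_talg :: talg is tone unfolding tone_def by (rule fin_supp_tmono)
lift_definition plus_talg :: "talg \<Rightarrow> talg \<Rightarrow> talg" is tadd by (rule fin_supp_tadd)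
lift_definition uminus_talg :: "talg \<Rightarrow> talg" is "tsmult (-1)" by (rule fin_supp_tsmult)
lift_definition minus_talg :: "talg \<Rightarrow> talg \<Rightarrow> talg" is "\<lambda>f g. tadd f (tsmult (-1) g)"
  by (simp add: fin_supp_tadd fin_supp_tsmult)
lift_definition times_talg :: "talg \<Rightarrow> talg \<Rightarrow> talg" is tmul by (rule fin_supp_tmul)

instance
proof
  fix a b c :: talg
  show "a * b * c = a * (b * c)" by transfer (rule tmul_assoc)
  show "1 * a = a" by transfer (rule tmul_tone_left)
  show "a * 1 = a" by transfer (rule tmul_tone_right)
  show "(a + b) * c = a * c + b * c" by transfer (rule tmul_tadd_left)
  show "a * (b + c) = a * b + a * c" by transfer (rule tmul_tadd_right)
  show "a + b + c = a + (b + c)" by transfer (simp add: tadd_def add.assoc)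
  show "a + b = b + a" by transfer (simp add: tadd_def add.commute)
  show "0 + a = a" by transfer (simp add: tadd_def)
  show "- a + a = 0" by transfer (simp add: tadd_def tsmult_def)
  show "a - b = a + - b" by transfer simp
  show "(0 :: talg) \<noteq> 1" by transfer (auto simp: tone_def tmono_def fun_eq_iff)
qed

end

lift_definition smul :: "complex \<Rightarrow> talg \<Rightarrow> talg" is tsmult by (rule fin_supp_tsmult)

lift_definition word :: "gen list \<Rightarrow> talg" is tmono by (rule fin_supp_tmono)

lemma smul_mult_left [simp]: "smul c x * y = smul c (x * y)"
  by transfer (rule tmul_tsmult_left)

lemma smul_mult_right [simp]: "x * smul c y = smul c (x * y)"
  by transfer (rule tmul_tsmult_right)

lemma smul_smul [simp]: "smul c (smul d x) = smul (c * d) x"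
  by transfer (simp add: tsmult_def mult.assoc)

lemma smul_one [simp]: "smul 1 x = x"
  by transfer (simp add: tsmult_def)

lemma smul_zero_left [simp]: "smul 0 x = 0"
  by transfer (simp add: tsmult_def)

lemma smul_zero_right [simp]: "smul c 0 = 0"
  by transfer (simp add: tsmult_def)

lemma smul_minus_one: "smul (-1) x = - x"
  by transfer simp

lemma smul_minus_left: "smul (- c) x = - smul c x"
  by transfer (simp add: tsmult_def)

lemma smul_add_right: "smul c (x + y) = smul c x + smul c y"
  by transfer (simp add: tsmult_def tadd_def distrib_left)

lemma smul_add_left: "smul (c + d) x = smul c x + smul d x"
  by transfer (simp add: tsmult_def tadd_def distrib_right)

lemma smul_diff_right: "smul c (x - y) = smul c x - smul c y"
  by transfer (simp add: tsmult_def tadd_def algebra_simps)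

lemma smul_sum: "smul c (\<Sum>i\<in>S. f i) = (\<Sum>i\<in>S. smul c (f i))"
  by (induction S rule: infinite_finite_induct) (auto simp: smul_add_right)

lemma word_append: "word (a @ b) = word a * word b"
  by transfer (simp add: tmul_tmono)

lemma word_Nil: "word [] = 1"
  by transfer (simp add: tone_def)

lemma finite_support: "finite {w. Rep_talg x w \<noteq> 0}"
  using Rep_talg[of x] by (simp add: fin_supp_def)

lemma Rep_talg_sum: "Rep_talg (\<Sum>i\<in>S. f i) = (\<lambda>w. \<Sum>i\<in>S. Rep_talg (f i) w)"
  by (induction S rule: infinite_finite_induct) (auto simp: zero_talg.rep_eq plus_talg.rep_eq tadd_def)

lemma talg_eq_sum_words: "x = (\<Sum>w\<in>{w. Rep_talg x w \<noteq> 0}. smul (Rep_talg x w) (word w))"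
proof (rule Rep_talg_inject[THEN iffD1], rule ext)
  fix w'
  have "(\<Sum>w\<in>{w. Rep_talg x w \<noteq> 0}. Rep_talg (smul (Rep_talg x w) (word w)) w') =
        (\<Sum>w\<in>{w. Rep_talg x w \<noteq> 0}. if w' = w then Rep_talg x w else 0)"
    by (intro sum.cong) (auto simp: smul.rep_eq word.rep_eq tsmult_def tmono_def)
  also have "\<dots> = Rep_talg x w'"
    using finite_support[of x] by (simp add: sum.delta)
  finally show "Rep_talg x w' = Rep_talg (\<Sum>w\<in>{w. Rep_talg x w \<noteq> 0}. smul (Rep_talg x w) (word w)) w'"
    by (simp add: Rep_talg_sum)
qed

lemma talg_induct [case_names zero word add]:
  assumes "P 0" and "\<And>c ws. P (smul c (word ws))" and "\<And>x y. P x \<Longrightarrow> P y \<Longrightarrow> P (x + y)"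
  shows "P x"
proof -
  have "P (\<Sum>w\<in>S. smul (Rep_talg x w) (word w))" if "finite S" for S
    using that by (induction S rule: finite_induct) (auto intro: assms)
  from this[OF finite_support] show ?thesis
    by (subst talg_eq_sum_words)
qed

lemma Abs_talg_tmono: "Abs_talg (tmono ws) = word ws"
  by (rule Rep_talg_inject[THEN iffD1]) (simp add: Abs_talg_inverse fin_supp_tmono word.rep_eq)

lemma Abs_talg_tsmult_tmono: "Abs_talg (tsmult c (tmono ws)) = smul c (word ws)"
  by (rule Rep_talg_inject[THEN iffD1])
     (simp add: Abs_talg_inverse fin_supp_tsmult fin_supp_tmono word.rep_eq smul.rep_eq)

lemma Abs_talg_zero: "Abs_talg (\<lambda>w. 0) = 0"
  by (simp add: zero_talg_def)

lemma talg_eqI: "(\<And>w. Rep_talg x w = Rep_talg y w) \<Longrightarrow> x = y"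
  by (rule Rep_talg_inject[THEN iffD1]) auto

lemmas Rep_talg_simps = plus_talg.rep_eq minus_talg.rep_eq uminus_talg.rep_eq zero_talg.rep_eq
  one_talg.rep_eq smul.rep_eq word.rep_eq tadd_def tsmult_def tmono_def tone_def

section \<open>Word operators, weights and twisted derivations\<close>

definition lin_ext :: "(gen list \<Rightarrow> 'a \<Rightarrow> complex) \<Rightarrow> tens \<Rightarrow> 'a \<Rightarrow> complex" where
  "lin_ext T f = (\<lambda>y. \<Sum>w\<in>{w. f w \<noteq> 0}. f w * T w y)"

lemma lin_eq_lin_ext: "lin T f = lin_ext T f"
  by (simp add: lin_def lin_ext_def)

lemma lin_ext_superset:
  "finite S \<Longrightarrow> {w. f w \<noteq> 0} \<subseteq> S \<Longrightarrow> lin_ext T f = (\<lambda>y. \<Sum>w\<in>S. f w * T w y)"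
  unfolding lin_ext_def by (intro ext sum.mono_neutral_left) auto

lemma lin_ext_tadd:
  assumes "fin_supp f" and "fin_supp g"
  shows "lin_ext T (tadd f g) = (\<lambda>y. lin_ext T f y + lin_ext T g y)"
proof -
  let ?S = "{w. f w \<noteq> 0} \<union> {w. g w \<noteq> 0}"
  have S: "finite ?S" using assms by (simp add: fin_supp_def)
  show ?thesis
    by (subst (1 2 3) lin_ext_superset[OF S])
       (auto simp: tadd_def sum.distrib distrib_right)
qed

lemma lin_ext_tsmult: "lin_ext T (tsmult c f) = (\<lambda>y. c * lin_ext T f y)"
proof (cases "c = 0")
  case False
  then have "{w. tsmult c f w \<noteq> 0} = {w. f w \<noteq> 0}" by (auto simp: tsmult_def)
  then show ?thesis by (simp add: lin_ext_def tsmult_def sum_distrib_left mult.assoc)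
qed (simp add: lin_ext_def tsmult_def)

lemma lin_ext_tmono: "lin_ext T (tmono ws) = T ws"
  by (subst lin_ext_superset[of "{ws}"]) (auto simp: tmono_def)

lemma fin_supp_lin:
  assumes "fin_supp f" and "\<And>w. fin_supp (T w)"
  shows "fin_supp (lin T f)"
proof -
  have "{y. lin T f y \<noteq> 0} \<subseteq> (\<Union>w\<in>{w. f w \<noteq> 0}. {y. T w y \<noteq> 0})"
  proof
    fix y assume "y \<in> {y. lin T f y \<noteq> 0}"
    then obtain w where "f w \<noteq> 0" "f w * T w y \<noteq> 0"
      unfolding lin_def by (auto elim: sum.not_neutral_contains_not_neutral)
    then show "y \<in> (\<Union>w\<in>{w. f w \<noteq> 0}. {y. T w y \<noteq> 0})" by auto
  qed
  moreover have "finite (\<Union>w\<in>{w. f w \<noteq> 0}. {y. T w y \<noteq> 0})"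
    using assms by (auto simp: fin_supp_def)
  ultimately show ?thesis unfolding fin_supp_def by (rule finite_subset)
qed

definition lin_op :: "(gen list \<Rightarrow> tens) \<Rightarrow> talg \<Rightarrow> talg" where
  "lin_op T x = Abs_talg (lin T (Rep_talg x))"

locale word_operator =
  fixes T :: "gen list \<Rightarrow> tens"
  assumes fin_supp_image: "fin_supp (T w)"
begin

lemma Rep_lin_op: "Rep_talg (lin_op T x) = lin T (Rep_talg x)"
  unfolding lin_op_def using Rep_talg fin_supp_image
  by (intro Abs_talg_inverse) (simp add: fin_supp_lin)

lemma lin_op_add: "lin_op T (x + y) = lin_op T x + lin_op T y"
proof (rule Rep_talg_inject[THEN iffD1])
  have "lin_ext T (tadd (Rep_talg x) (Rep_talg y)) = tadd (lin_ext T (Rep_talg x)) (lin_ext T (Rep_talg y))"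
    using lin_ext_tadd[of "Rep_talg x" "Rep_talg y" T] Rep_talg[of x] Rep_talg[of y] by (simp add: tadd_def)
  then show "Rep_talg (lin_op T (x + y)) = Rep_talg (lin_op T x + lin_op T y)"
    by (simp add: Rep_lin_op plus_talg.rep_eq lin_eq_lin_ext)
qed

lemma lin_op_smul: "lin_op T (smul c x) = smul c (lin_op T x)"
proof (rule Rep_talg_inject[THEN iffD1])
  have "lin_ext T (tsmult c (Rep_talg x)) = tsmult c (lin_ext T (Rep_talg x))"
    using lin_ext_tsmult[of T c "Rep_talg x"] by (simp add: tsmult_def)
  then show "Rep_talg (lin_op T (smul c x)) = Rep_talg (smul c (lin_op T x))"
    by (simp add: Rep_lin_op smul.rep_eq lin_eq_lin_ext)
qed

lemma lin_op_zero: "lin_op T 0 = 0"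
  using lin_op_smul[of 0 0] by simp

end

definition homog_tens :: "int \<Rightarrow> tens \<Rightarrow> bool" where
  "homog_tens d f \<longleftrightarrow> (\<forall>w. f w \<noteq> 0 \<longrightarrow> wtw w = d)"

definition homog :: "int \<Rightarrow> talg \<Rightarrow> bool" where
  "homog d x \<longleftrightarrow> homog_tens d (Rep_talg x)"

lemma wtw_Nil [simp]: "wtw [] = 0"
  by (simp add: wtw_def)

lemma wtw_Cons [simp]: "wtw (x # xs) = wt x + wtw xs"
  by (simp add: wtw_def)

lemma wtw_append [simp]: "wtw (a @ b) = wtw a + wtw b"
  by (simp add: wtw_def)

lemma homog_tens_tmul: "homog_tens d1 f \<Longrightarrow> homog_tens d2 g \<Longrightarrow> homog_tens (d1 + d2) (tmul f g)"
  unfolding homog_tens_def tmul_def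
  by (auto elim!: sum.not_neutral_contains_not_neutral) (metis append_take_drop_id wtw_append)

lemma homog_tens_tadd: "homog_tens d f \<Longrightarrow> homog_tens d g \<Longrightarrow> homog_tens d (tadd f g)"
  unfolding homog_tens_def tadd_def by (metis add.left_neutral)

lemma homog_tens_tsmult: "homog_tens d f \<Longrightarrow> homog_tens d (tsmult c f)"
  unfolding homog_tens_def tsmult_def by auto

lemma homog_tens_tmono: "wtw ws = d \<Longrightarrow> homog_tens d (tmono ws)"
  unfolding homog_tens_def tmono_def by auto

lemma homog_tens_zero: "homog_tens d (\<lambda>w. 0)"
  unfolding homog_tens_def by auto

lemma homog_tens_lin:
  assumes "\<And>w. homog_tens (wtw w + e) (T w)" and "homog_tens d f"
  shows "homog_tens (d + e) (lin T f)"
  using assms unfolding homog_tens_def lin_def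
  by (auto elim!: sum.not_neutral_contains_not_neutral)

lemma homog_mult: "homog d1 x \<Longrightarrow> homog d2 y \<Longrightarrow> homog (d1 + d2) (x * y)"
  unfolding homog_def by (simp add: times_talg.rep_eq homog_tens_tmul)

lemma homog_add: "homog d x \<Longrightarrow> homog d y \<Longrightarrow> homog d (x + y)"
  unfolding homog_def by (simp add: plus_talg.rep_eq homog_tens_tadd)

lemma homog_smul: "homog d x \<Longrightarrow> homog d (smul c x)"
  unfolding homog_def by (simp add: smul.rep_eq homog_tens_tsmult)

lemma homog_word: "wtw ws = d \<Longrightarrow> homog d (word ws)"
  unfolding homog_def by (simp add: word.rep_eq homog_tens_tmono)

lemma homog_one: "homog 0 1"
  using homog_word[of "[]"] by (simp add: word_Nil)

lemma homog_power: "homog 0 x \<Longrightarrow> homog 0 (x ^ n)"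
  by (induction n) (auto simp: homog_one dest: homog_mult)

lemma (in word_operator) homog_lin_op:
  assumes "\<And>w. homog_tens (wtw w + e) (T w)" and "homog d x"
  shows "homog (d + e) (lin_op T x)"
  using assms unfolding homog_def by (simp add: Rep_lin_op homog_tens_lin)

definition diag :: "(int \<Rightarrow> complex) \<Rightarrow> gen list \<Rightarrow> tens" where
  "diag \<phi> ws = tsmult (\<phi> (wtw ws)) (tmono ws)"

interpretation diag: word_operator "diag \<phi>"
  by unfold_locales (simp add: diag_def fin_supp_tsmult fin_supp_tmono)

lemma lin_op_diag_word: "lin_op (diag \<phi>) (word ws) = smul (\<phi> (wtw ws)) (word ws)"
  by (rule Rep_talg_inject[THEN iffD1])
     (simp add: diag.Rep_lin_op word.rep_eq smul.rep_eq lin_eq_lin_ext lin_ext_tmono diag_def)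

lemma lin_op_diag_homog:
  assumes "homog d x"
  shows "lin_op (diag \<phi>) x = smul (\<phi> d) x"
proof (rule Rep_talg_inject[THEN iffD1], rule ext)
  fix w'
  have "Rep_talg (lin_op (diag \<phi>) x) w' = (\<Sum>w\<in>{w. Rep_talg x w \<noteq> 0}. if w' = w then Rep_talg x w * \<phi> (wtw w) else 0)"
    by (simp add: diag.Rep_lin_op lin_def) (intro sum.cong, auto simp: diag_def tsmult_def tmono_def)
  also have "\<dots> = \<phi> d * Rep_talg x w'"
    using finite_support[of x] assms unfolding homog_def homog_tens_def by (auto simp: sum.delta)
  finally show "Rep_talg (lin_op (diag \<phi>) x) w' = Rep_talg (smul (\<phi> d) x) w'"
    by (simp add: smul.rep_eq tsmult_def)
qed

fun word_der :: "complex \<Rightarrow> (gen \<Rightarrow> tens) \<Rightarrow> gen list \<Rightarrow> tens" where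
  "word_der q g [] = (\<lambda>w. 0)"
| "word_der q g (x # xs) =
     tadd (tsmult (q powi (- wt x)) (tmul (tmono [x]) (word_der q g xs)))
          (tsmult (q powi (wtw xs)) (tmul (g x) (tmono xs)))"

lemma wordX_eq_word_der: "wordX q = word_der q (genX q)"
proof
  show "wordX q ws = word_der q (genX q) ws" for ws by (induction ws) auto
qed

lemma wordY_eq_word_der: "wordY q = word_der q (genY q)"
proof
  show "wordY q ws = word_der q (genY q) ws" for ws by (induction ws) auto
qed

definition der :: "complex \<Rightarrow> (gen \<Rightarrow> tens) \<Rightarrow> talg \<Rightarrow> talg" where
  "der q g = lin_op (word_der q g)"

definition Eminus :: "complex \<Rightarrow> talg \<Rightarrow> talg" where
  "Eminus q = lin_op (diag (\<lambda>d. q powi (- d)))"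

definition Eplus :: "complex \<Rightarrow> talg \<Rightarrow> talg" where
  "Eplus q = lin_op (diag (\<lambda>d. q powi d))"

lemma Eminus_homog: "homog d x \<Longrightarrow> Eminus q x = smul (q powi (- d)) x"
  unfolding Eminus_def by (rule lin_op_diag_homog)

lemma Eplus_homog: "homog d x \<Longrightarrow> Eplus q x = smul (q powi d) x"
  unfolding Eplus_def by (rule lin_op_diag_homog)

locale twisted_derivation =
  fixes q :: complex and g :: "gen \<Rightarrow> tens" and e :: int
  assumes q_nonzero: "q \<noteq> 0"
    and fin_supp_gen: "fin_supp (g x)"
    and homog_gen: "homog_tens (wt x + e) (g x)"
begin

lemma fin_supp_word_der: "fin_supp (word_der q g ws)"
  by (induction ws) (auto simp: fin_supp_zero fin_supp_tadd fin_supp_tsmult fin_supp_tmul fin_supp_tmono fin_supp_gen)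

sublocale word_operator "word_der q g"
  by unfold_locales (rule fin_supp_word_der)

lemma homog_tens_word_der: "homog_tens (wtw ws + e) (word_der q g ws)"
proof (induction ws)
  case Nil
  then show ?case by (simp add: homog_tens_zero)
next
  case (Cons x xs)
  have "homog_tens (wt x + (wtw xs + e)) (tmul (tmono [x]) (word_der q g xs))"
    by (intro homog_tens_tmul homog_tens_tmono Cons.IH) simp
  moreover have "homog_tens ((wt x + e) + wtw xs) (tmul (g x) (tmono xs))"
    by (intro homog_tens_tmul homog_tens_tmono homog_gen) simp
  ultimately show ?case
    by (simp add: homog_tens_tadd homog_tens_tsmult add_ac)
qed

lemma der_add: "der q g (x + y) = der q g x + der q g y"
  unfolding der_def by (rule lin_op_add)

lemma der_smul: "der q g (smul c x) = smul c (der q g x)"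
  unfolding der_def by (rule lin_op_smul)

lemma der_zero: "der q g 0 = 0"
  unfolding der_def by (rule lin_op_zero)

lemma homog_der: "homog d x \<Longrightarrow> homog (d + e) (der q g x)"
  unfolding der_def by (rule homog_lin_op[OF homog_tens_word_der])

lemma Rep_der_word: "Rep_talg (der q g (word ws)) = word_der q g ws"
  by (simp add: der_def Rep_lin_op word.rep_eq lin_eq_lin_ext lin_ext_tmono)

lemma Rep_Abs_gen: "Rep_talg (Abs_talg (g x)) = g x"
  by (simp add: Abs_talg_inverse fin_supp_gen)

lemma der_word_Cons:
  "der q g (word (x # xs)) = smul (q powi (- wt x)) (word [x] * der q g (word xs))
     + smul (q powi (wtw xs)) (Abs_talg (g x) * word xs)"
  by (rule Rep_talg_inject[THEN iffD1])
     (simp add: Rep_der_word Rep_Abs_gen plus_talg.rep_eq smul.rep_eq times_talg.rep_eq word.rep_eq)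

lemma der_one: "der q g 1 = 0"
  by (rule Rep_talg_inject[THEN iffD1]) (simp add: Rep_der_word zero_talg.rep_eq flip: word_Nil)

lemma der_gen: "der q g (word [x]) = Abs_talg (g x)"
  by (simp add: der_word_Cons der_one word_Nil)

lemma der_word_append:
  "der q g (word (a @ b)) = smul (q powi (- wtw a)) (word a * der q g (word b))
     + smul (q powi (wtw b)) (der q g (word a) * word b)"
proof (induction a)
  case Nil
  then show ?case by (simp add: der_one word_Nil)
next
  case (Cons x a)
  show ?case
    unfolding append_Cons der_word_Cons Cons.IH
    by (simp add: word_append smul_add_right distrib_left distrib_right mult.assoc
        power_int_add power_int_diff q_nonzero algebra_simps power_int_minus divide_inverse
        word_append[of "[x]" a, simplified])
qed

text \<open>The coproduct rule \<open>\<Delta>(Z) = E\<^sub>- \<otimes> Z + Z \<otimes> E\<^sub>+\<close> as a twisted Leibniz rule.\<close>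

lemma der_mult: "der q g (x * y) = Eminus q x * der q g y + der q g x * Eplus q y"
proof (induction x arbitrary: y rule: talg_induct)
  case zero
  then show ?case by (simp add: der_zero Eminus_def diag.lin_op_zero)
next
  case (add x1 x2)
  then show ?case by (simp add: distrib_right der_add Eminus_def diag.lin_op_add)
next
  case (word c a)
  show ?case
  proof (induction y rule: talg_induct)
    case zero
    then show ?case by (simp add: der_zero Eplus_def diag.lin_op_zero)
  next
    case (add y1 y2)
    then show ?case by (simp add: distrib_left der_add Eplus_def diag.lin_op_add)
  next
    case (word d b)
    show ?case
      by (simp add: Eminus_def Eplus_def diag.lin_op_smul lin_op_diag_word der_smul flip: word_append)
         (simp add: der_word_append smul_add_right mult_ac)
  qed
qed

end

lemma fin_supp_genX: "fin_supp (genX q x)"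
  by (cases x) (auto simp: fin_supp_zero fin_supp_tsmult fin_supp_tmono)

lemma fin_supp_genY: "fin_supp (genY q x)"
  by (cases x) (auto simp: fin_supp_zero fin_supp_tsmult fin_supp_tmono)

lemma homog_tens_genX: "homog_tens (wt x + 1) (genX q x)"
  by (cases x) (auto simp: homog_tens_zero intro!: homog_tens_tsmult homog_tens_tmono)

lemma homog_tens_genY: "homog_tens (wt x - 1) (genY q x)"
  by (cases x) (auto simp: homog_tens_zero intro!: homog_tens_tsmult homog_tens_tmono)

definition Eop :: "complex \<Rightarrow> talg \<Rightarrow> talg" where
  "Eop q = lin_op (diag (\<lambda>d. q powi (2 * d) + q powi (- 2 * d) - 2))"

definition casimir :: "complex \<Rightarrow> talg \<Rightarrow> talg" where
  "casimir q x = smul (q / 2) (der q (genX q) (der q (genY q) x) + der q (genY q) (der q (genX q) x))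
     + smul (q^2 * (1 + q^2) / (2 * (1 - q^2)^2)) (Eop q x)"

lemma Eop_homog_0: "homog 0 x \<Longrightarrow> Eop q x = 0"
  unfolding Eop_def by (subst lin_op_diag_homog) auto

section \<open>The ideal of relations\<close>

lemma fin_supp_ideal: "f \<in> ideal q h c \<Longrightarrow> fin_supp f"
proof (induction rule: ideal.induct)
  case (gen r a b)
  then have "fin_supp r"
    unfolding rels_def rel1_def rel2_def rel3_def rel4_def tone_def
    by (auto simp: fin_supp_tadd fin_supp_tsmult fin_supp_tmono)
  then show ?case by (simp add: fin_supp_tmul fin_supp_tmono)
qed (simp_all add: fin_supp_zero fin_supp_tadd fin_supp_tsmult)

lemma ideal_tmul_tmono_left: "f \<in> ideal q h c \<Longrightarrow> tmul (tmono ws) f \<in> ideal q h c"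
proof (induction rule: ideal.induct)
  case (gen r a b)
  then show ?case using ideal.gen[OF gen, of "ws @ a" b]
    by (simp add: tmul_assoc[symmetric] tmul_tmono)
qed (simp_all add: tmul_zero_right tmul_tadd_right tmul_tsmult_right ideal.intros)

lemma ideal_tmul_tmono_right: "f \<in> ideal q h c \<Longrightarrow> tmul f (tmono ws) \<in> ideal q h c"
proof (induction rule: ideal.induct)
  case (gen r a b)
  then show ?case using ideal.gen[OF gen, of a "b @ ws"]
    by (simp add: tmul_assoc tmul_tmono[symmetric])
qed (simp_all add: tmul_zero_left tmul_tadd_left tmul_tsmult_left ideal.intros)

lemma rels_subset_ideal: "r \<in> rels q h c \<Longrightarrow> r \<in> ideal q h c"
  using ideal.gen[of r q h c "[]" "[]"] by (simp flip: tone_def add: tmul_tone_left tmul_tone_right)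

definition rel_ideal :: "complex \<Rightarrow> complex \<Rightarrow> complex \<Rightarrow> talg set" where
  "rel_ideal q h c = {x. Rep_talg x \<in> ideal q h c}"

lemma rel_ideal_zero: "0 \<in> rel_ideal q h c"
  unfolding rel_ideal_def by (simp add: zero_talg.rep_eq ideal.zero)

lemma rel_ideal_add: "x \<in> rel_ideal q h c \<Longrightarrow> y \<in> rel_ideal q h c \<Longrightarrow> x + y \<in> rel_ideal q h c"
  unfolding rel_ideal_def by (simp add: plus_talg.rep_eq ideal.add)

lemma rel_ideal_smul: "x \<in> rel_ideal q h c \<Longrightarrow> smul d x \<in> rel_ideal q h c"
  unfolding rel_ideal_def by (simp add: smul.rep_eq ideal.smult)

lemma rel_ideal_uminus: "x \<in> rel_ideal q h c \<Longrightarrow> - x \<in> rel_ideal q h c"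
  using rel_ideal_smul[of x q h c "-1"] by (simp add: smul_minus_one)

lemma rel_ideal_diff: "x \<in> rel_ideal q h c \<Longrightarrow> y \<in> rel_ideal q h c \<Longrightarrow> x - y \<in> rel_ideal q h c"
  using rel_ideal_add[of x q h c "- y"] rel_ideal_uminus by simp

lemma rel_ideal_mult_left:
  assumes "x \<in> rel_ideal q h c"
  shows "y * x \<in> rel_ideal q h c"
proof (induction y rule: talg_induct)
  case (word d ws)
  have "word ws * x \<in> rel_ideal q h c"
    using assms by (simp add: rel_ideal_def times_talg.rep_eq word.rep_eq ideal_tmul_tmono_left)
  then show ?case by (simp add: rel_ideal_smul)
qed (simp_all add: rel_ideal_zero distrib_right rel_ideal_add)

lemma rel_ideal_mult_right:
  assumes "x \<in> rel_ideal q h c"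
  shows "x * y \<in> rel_ideal q h c"
proof (induction y rule: talg_induct)
  case (word d ws)
  have "x * word ws \<in> rel_ideal q h c"
    using assms by (simp add: rel_ideal_def times_talg.rep_eq word.rep_eq ideal_tmul_tmono_right)
  then show ?case by (simp add: rel_ideal_smul)
qed (simp_all add: rel_ideal_zero distrib_left rel_ideal_add)

definition cong_rel :: "complex \<Rightarrow> complex \<Rightarrow> complex \<Rightarrow> talg \<Rightarrow> talg \<Rightarrow> bool" where
  "cong_rel q h c x y \<longleftrightarrow> x - y \<in> rel_ideal q h c"

lemma cong_rel_refl: "cong_rel q h c x x"
  unfolding cong_rel_def by (simp add: rel_ideal_zero)

lemma cong_rel_trans [trans]: "cong_rel q h c x y \<Longrightarrow> cong_rel q h c y z \<Longrightarrow> cong_rel q h c x z"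
  unfolding cong_rel_def using rel_ideal_add by fastforce

lemma cong_rel_add:
  "cong_rel q h c x y \<Longrightarrow> cong_rel q h c x' y' \<Longrightarrow> cong_rel q h c (x + x') (y + y')"
  unfolding cong_rel_def using rel_ideal_add by (fastforce simp: algebra_simps)

lemma cong_rel_smul: "cong_rel q h c x y \<Longrightarrow> cong_rel q h c (smul d x) (smul d y)"
  unfolding cong_rel_def using rel_ideal_smul by (fastforce simp: smul_diff_right[symmetric])

lemma cong_rel_mult_left: "cong_rel q h c x y \<Longrightarrow> cong_rel q h c (z * x) (z * y)"
  unfolding cong_rel_def using rel_ideal_mult_left by (fastforce simp: right_diff_distrib[symmetric])

lemma cong_rel_mult_right: "cong_rel q h c x y \<Longrightarrow> cong_rel q h c (x * z) (y * z)"
  unfolding cong_rel_def using rel_ideal_mult_right by (fastforce simp: left_diff_distrib[symmetric])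

lemma cong_rel_sum:
  "(\<And>i. i \<in> S \<Longrightarrow> cong_rel q h c (f i) (g i)) \<Longrightarrow> cong_rel q h c (\<Sum>i\<in>S. f i) (\<Sum>i\<in>S. g i)"
  by (induction S rule: infinite_finite_induct) (auto simp: cong_rel_refl cong_rel_add)

lemma cong_rel_in_rel_ideal_iff:
  "cong_rel q h c x y \<Longrightarrow> x \<in> rel_ideal q h c \<longleftrightarrow> y \<in> rel_ideal q h c"
  unfolding cong_rel_def using rel_ideal_diff rel_ideal_add by fastforce

section \<open>Polynomials in one element\<close>

definition peval :: "talg \<Rightarrow> complex poly \<Rightarrow> talg" where
  "peval x p = (\<Sum>i\<le>degree p. smul (coeff p i) (x ^ i))"

lemma peval_bound: "degree p \<le> N \<Longrightarrow> peval x p = (\<Sum>i\<le>N. smul (coeff p i) (x ^ i))"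
  unfolding peval_def by (rule sum.mono_neutral_left) (auto simp: coeff_eq_0)

lemma peval_0 [simp]: "peval x 0 = 0"
  by (simp add: peval_def)

lemma peval_add: "peval x (p + r) = peval x p + peval x r"
proof -
  let ?N = "max (degree p) (degree r)"
  have "peval x (p + r) = (\<Sum>i\<le>?N. smul (coeff (p + r) i) (x ^ i))"
    by (rule peval_bound) (simp add: degree_add_le)
  also have "\<dots> = peval x p + peval x r"
    by (simp add: peval_bound[of p ?N] peval_bound[of r ?N] smul_add_left sum.distrib)
  finally show ?thesis .
qed

lemma peval_diff: "peval x (p - r) = peval x p - peval x r"
  using peval_add[of x "p - r" r] by simp

lemma peval_sum: "peval x (\<Sum>i\<in>S. f i) = (\<Sum>i\<in>S. peval x (f i))"
  by (induction S rule: infinite_finite_induct) (auto simp: peval_add)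

lemma peval_smult: "peval x (smult c p) = smul c (peval x p)"
  using peval_bound[of "smult c p" "degree p" x] by (simp add: degree_smult_le peval_def smul_sum)

lemma peval_pCons: "peval x (pCons b p) = smul b 1 + x * peval x p"
proof -
  have "peval x (pCons b p) = (\<Sum>i\<le>Suc (degree p). smul (coeff (pCons b p) i) (x ^ i))"
    by (rule peval_bound) (simp add: degree_pCons_le)
  also have "\<dots> = smul b 1 + x * peval x p"
    by (simp only: sum.atMost_Suc_shift) (simp add: peval_def sum_distrib_left)
  finally show ?thesis .
qed

lemma peval_mult: "peval x (p * r) = peval x p * peval x r"
  by (induction p rule: pCons_induct)
     (simp_all add: peval_add peval_smult peval_pCons distrib_right mult.assoc)

lemma peval_monom: "peval x (monom b n) = smul b (x ^ n)"
proof -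
  have "peval x (monom b n) = (\<Sum>i\<le>n. smul (coeff (monom b n) i) (x ^ i))"
    by (rule peval_bound) (simp add: degree_monom_le)
  also have "\<dots> = (\<Sum>i\<le>n. if i = n then smul b (x ^ n) else 0)"
    by (intro sum.cong) auto
  finally show ?thesis by simp
qed

lemma peval_quadratic: "peval x [:b0, b1, b2:] = smul b0 1 + smul b1 x + smul b2 (x * x)"
  by (simp add: peval_pCons smul_add_right algebra_simps)

section \<open>Triangular systems\<close>

text \<open>If \<open>K v\<^sup>~\<^sup>m \<equiv> \<kappa>\<^sub>m(v\<^sup>~)\<close>, then \<open>(K - l) (\<Sum>\<^sub>j\<^sub>\<le>\<^sub>k A\<^sub>j v\<^sup>~\<^sup>k\<^sup>-\<^sup>j)\<close> is congruent to
  \<open>eigen_residual \<kappa> l k A\<close> evaluated at \<open>v\<^sup>~\<close>.\<close>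

definition eigen_residual :: "(nat \<Rightarrow> 'a::field poly) \<Rightarrow> 'a \<Rightarrow> nat \<Rightarrow> (nat \<Rightarrow> 'a) \<Rightarrow> 'a poly" where
  "eigen_residual \<kappa> l k A = (\<Sum>j\<le>k. smult (A j) (\<kappa> (k - j))) - smult l (\<Sum>j\<le>k. monom (A j) (k - j))"

definition triangular_eq :: "(nat \<Rightarrow> 'a::field poly) \<Rightarrow> nat \<Rightarrow> (nat \<Rightarrow> 'a) \<Rightarrow> nat \<Rightarrow> bool" where
  "triangular_eq \<kappa> k A i \<longleftrightarrow>
     (\<Sum>j<i. A j * coeff (\<kappa> (k - j)) (k - i)) + A i * (coeff (\<kappa> (k - i)) (k - i) - coeff (\<kappa> k) k) = 0"

locale triangular =
  fixes \<kappa> :: "nat \<Rightarrow> 'a::field poly"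
  assumes degree_le: "degree (\<kappa> m) \<le> m"
begin

lemma coeff_eigen_residual:
  "coeff (eigen_residual \<kappa> l k A) n
     = (\<Sum>j\<le>k. A j * coeff (\<kappa> (k - j)) n) - l * (\<Sum>j\<le>k. if k - j = n then A j else 0)"
  by (simp add: eigen_residual_def coeff_sum coeff_monom)

lemma coeff_eq_0_above: "m < n \<Longrightarrow> coeff (\<kappa> m) n = 0"
  using degree_le[of m] by (intro coeff_eq_0) simp

lemma coeff_eigen_residual_above:
  assumes "k < n"
  shows "coeff (eigen_residual \<kappa> l k A) n = 0"
proof -
  have "(\<Sum>j\<le>k. A j * coeff (\<kappa> (k - j)) n) = 0" "(\<Sum>j\<le>k. if k - j = n then A j else 0) = 0"
    using assms by (auto intro!: sum.neutral simp: coeff_eq_0_above)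
  then show ?thesis
    by (simp add: coeff_eigen_residual)
qed

lemma coeff_eigen_residual_below:
  assumes "i \<le> k"
  shows "coeff (eigen_residual \<kappa> (coeff (\<kappa> k) k) k A) (k - i)
    = (\<Sum>j<i. A j * coeff (\<kappa> (k - j)) (k - i)) + A i * (coeff (\<kappa> (k - i)) (k - i) - coeff (\<kappa> k) k)"
proof -
  have "(\<Sum>j\<le>k. A j * coeff (\<kappa> (k - j)) (k - i)) = (\<Sum>j\<le>i. A j * coeff (\<kappa> (k - j)) (k - i))"
    using assms by (intro sum.mono_neutral_right) (auto simp: coeff_eq_0_above)
  also have "\<dots> = (\<Sum>j<i. A j * coeff (\<kappa> (k - j)) (k - i)) + A i * coeff (\<kappa> (k - i)) (k - i)"
    by (simp add: lessThan_Suc_atMost[symmetric])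
  finally have "(\<Sum>j\<le>k. A j * coeff (\<kappa> (k - j)) (k - i))
      = (\<Sum>j<i. A j * coeff (\<kappa> (k - j)) (k - i)) + A i * coeff (\<kappa> (k - i)) (k - i)" .
  moreover have "(\<Sum>j\<le>k. if k - j = k - i then A j else 0) = (\<Sum>j\<le>k. if j = i then A j else 0)"
    using assms by (intro sum.cong) auto
  moreover have "(\<Sum>j\<le>k. if j = i then A j else 0) = A i"
    using assms by simp
  ultimately show ?thesis
    by (simp add: coeff_eigen_residual algebra_simps)
qed

lemma eigen_residual_eq_0_iff:
  "eigen_residual \<kappa> (coeff (\<kappa> k) k) k A = 0 \<longleftrightarrow> (\<forall>i\<le>k. triangular_eq \<kappa> k A i)"
  (is "?R = 0 \<longleftrightarrow> _")
proof
  assume R: "?R = 0"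
  show "\<forall>i\<le>k. triangular_eq \<kappa> k A i"
  proof (intro allI impI)
    fix i
    assume "i \<le> k"
    then show "triangular_eq \<kappa> k A i"
      using coeff_eigen_residual_below[of i k A] R by (simp add: triangular_eq_def)
  qed
next
  assume eqs: "\<forall>i\<le>k. triangular_eq \<kappa> k A i"
  show "?R = 0"
  proof (rule poly_eqI)
    fix n
    show "coeff ?R n = coeff 0 n"
    proof (cases "k < n")
      case False
      then have "k - (k - n) = n" "k - n \<le> k" by simp_all
      then show ?thesis
        using coeff_eigen_residual_below[of "k - n" k A] eqs[rule_format, of "k - n"]
        by (simp add: triangular_eq_def)
    qed (simp add: coeff_eigen_residual_above)
  qed
qed

fun forward_subst :: "nat \<Rightarrow> nat \<Rightarrow> 'a" where
  "forward_subst k i = (if i = 0 then 1 else if k < i then 0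
      else (\<Sum>j<i. forward_subst k j * coeff (\<kappa> (k - j)) (k - i)) / (coeff (\<kappa> k) k - coeff (\<kappa> (k - i)) (k - i)))"

declare forward_subst.simps [simp del]

lemma forward_subst_solves:
  assumes distinct: "\<And>i. 0 < i \<Longrightarrow> i \<le> k \<Longrightarrow> coeff (\<kappa> (k - i)) (k - i) \<noteq> coeff (\<kappa> k) k"
  shows "(\<forall>j>k. forward_subst k j = 0) \<and> forward_subst k 0 = 1
    \<and> eigen_residual \<kappa> (coeff (\<kappa> k) k) k (forward_subst k) = 0"
proof -
  have "triangular_eq \<kappa> k (forward_subst k) i" if "i \<le> k" for i
  proof (cases "i = 0")
    case False
    then have "coeff (\<kappa> k) k - coeff (\<kappa> (k - i)) (k - i) \<noteq> 0"
      using distinct[of i] that by simp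
    with False that show ?thesis
      unfolding triangular_eq_def by (subst forward_subst.simps[of k i]) (simp add: field_simps)
  qed (simp add: triangular_eq_def)
  moreover have "forward_subst k j = 0" if "k < j" for j
    using that by (subst forward_subst.simps) simp
  ultimately show ?thesis
    by (simp add: eigen_residual_eq_0_iff forward_subst.simps[of k 0])
qed

lemma eigen_residual_solution_unique:
  assumes distinct: "\<And>i. 0 < i \<Longrightarrow> i \<le> k \<Longrightarrow> coeff (\<kappa> (k - i)) (k - i) \<noteq> coeff (\<kappa> k) k"
    and A: "(\<forall>j>k. A j = 0) \<and> A 0 = 1 \<and> eigen_residual \<kappa> (coeff (\<kappa> k) k) k A = 0"
    and B: "(\<forall>j>k. B j = 0) \<and> B 0 = 1 \<and> eigen_residual \<kappa> (coeff (\<kappa> k) k) k B = 0"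
  shows "A = B"
proof
  fix i
  show "A i = B i"
  proof (induction i rule: less_induct)
    case (less i)
    show ?case
    proof (cases "0 < i \<and> i \<le> k")
      case True
      let ?d = "coeff (\<kappa> (k - i)) (k - i) - coeff (\<kappa> k) k"
      have "(\<Sum>j<i. A j * coeff (\<kappa> (k - j)) (k - i)) = (\<Sum>j<i. B j * coeff (\<kappa> (k - j)) (k - i))"
        using less.IH by simp
      moreover have "triangular_eq \<kappa> k A i" "triangular_eq \<kappa> k B i"
        using A B True by (simp_all add: eigen_residual_eq_0_iff)
      ultimately have "A i * ?d = B i * ?d"
        unfolding triangular_eq_def by (metis add_left_cancel)
      moreover have "?d \<noteq> 0"
        using distinct[of i] True by simp
      ultimately show ?thesis
        by simp
    qed (use A B in auto)
  qed
qed

lemma eigen_residual_unique_solution: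
  assumes "\<And>i. 0 < i \<Longrightarrow> i \<le> k \<Longrightarrow> coeff (\<kappa> (k - i)) (k - i) \<noteq> coeff (\<kappa> k) k"
  shows "\<exists>!A. (\<forall>j>k. A j = 0) \<and> A 0 = 1 \<and> eigen_residual \<kappa> (coeff (\<kappa> k) k) k A = 0"
  using forward_subst_solves[OF assms] eigen_residual_solution_unique[OF assms] by blast

end

section \<open>The relations and a representation on functions on the integers\<close>

lift_definition rel1_talg :: "complex \<Rightarrow> complex \<Rightarrow> complex \<Rightarrow> talg" is rel1
  unfolding rel1_def tone_def by (intro fin_supp_tadd fin_supp_tsmult fin_supp_tmono)

lift_definition rel2_talg :: "complex \<Rightarrow> complex \<Rightarrow> complex \<Rightarrow> talg" is rel2
  unfolding rel2_def by (intro fin_supp_tadd fin_supp_tsmult fin_supp_tmono)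

lift_definition rel3_talg :: "complex \<Rightarrow> complex \<Rightarrow> complex \<Rightarrow> talg" is rel3
  unfolding rel3_def by (intro fin_supp_tadd fin_supp_tsmult fin_supp_tmono)

lift_definition rel4_talg :: "complex \<Rightarrow> complex \<Rightarrow> complex \<Rightarrow> talg" is rel4
  unfolding rel4_def by (intro fin_supp_tadd fin_supp_tsmult fin_supp_tmono)

lemma rel1_talg_eq:
  "rel1_talg q h c = smul (q^2 + 1) (word [U, W]) + (word [V, V]
     + (smul ((q^2 + 1) / q^2) (word [W, U]) + smul (- c) 1))"
  by transfer (simp add: rel1_def tone_def)

lemma rel2_talg_eq: "rel2_talg q h c = smul (q^2) (word [U, V]) + (smul (-1) (word [V, U]) + smul h (word [U]))"
  by transfer (simp add: rel2_def)

lemma rel3_talg_eq: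
  "rel3_talg q h c = smul (q^2 + 1) (word [U, W] + smul (-1) (word [W, U]))
     + (smul (1 - q^2) (word [V, V]) + smul (- h) (word [V]))"
  by transfer (simp add: rel3_def)

lemma rel4_talg_eq: "rel4_talg q h c = smul (- (q^2)) (word [V, W]) + (word [W, V] + smul (- h) (word [W]))"
  by transfer (simp add: rel4_def)

lemma rels_eq: "rels q h c = Rep_talg ` {rel1_talg q h c, rel2_talg q h c, rel3_talg q h c, rel4_talg q h c}"
  by (simp add: rels_def rel1_talg.rep_eq rel2_talg.rep_eq rel3_talg.rep_eq rel4_talg.rep_eq)

lemma rel_talg_in_rel_ideal:
  "rel1_talg q h c \<in> rel_ideal q h c" "rel2_talg q h c \<in> rel_ideal q h c"
  "rel3_talg q h c \<in> rel_ideal q h c" "rel4_talg q h c \<in> rel_ideal q h c"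
  by (simp_all add: rel_ideal_def rels_subset_ideal rels_eq)

lift_definition vtil :: "complex \<Rightarrow> complex \<Rightarrow> talg" is vtilde
  unfolding vtilde_def tone_def by (intro fin_supp_tadd fin_supp_tsmult fin_supp_tmono)

lemma vtil_eq: "vtil q h = word [V] + smul (- (h / (1 - q^2))) 1"
  by transfer (simp add: vtilde_def tone_def)

lemma Rep_talg_power_vtil: "Rep_talg (vtil q h ^ n) = tpow (vtilde q h) n"
  by (induction n) (simp_all add: one_talg.rep_eq times_talg.rep_eq vtil.rep_eq)

text \<open>A representation of the algebra on functions \<open>\<int> \<Rightarrow> \<complex>\<close>: \<open>u\<close> and \<open>w\<close> act by shifts
  of the index, and \<open>rep_mu\<close>, \<open>rep_F\<close> are chosen so that the four relations act as zero
  (\<open>rep_rel_ideal\<close>), while \<open>v\<^sup>~\<close> acts as multiplication by \<open>q\<^sup>2\<^sup>n\<close> (\<open>rep_vt\<close>).\<close>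

definition rep_mu :: "complex \<Rightarrow> complex \<Rightarrow> int \<Rightarrow> complex" where
  "rep_mu q h n = h / (1 - q^2) + q powi (2 * n)"

definition rep_F :: "complex \<Rightarrow> complex \<Rightarrow> complex \<Rightarrow> int \<Rightarrow> complex" where
  "rep_F q h c n = (q^2 * c - (rep_mu q h n)^2 + h * rep_mu q h n) / (q^2 + 1)^2"

fun rep_gen :: "complex \<Rightarrow> complex \<Rightarrow> complex \<Rightarrow> gen \<Rightarrow> (int \<Rightarrow> complex) \<Rightarrow> int \<Rightarrow> complex" where
  "rep_gen q h c U \<phi> = (\<lambda>n. \<phi> (n - 1))"
| "rep_gen q h c V \<phi> = (\<lambda>n. rep_mu q h n * \<phi> n)"
| "rep_gen q h c W \<phi> = (\<lambda>n. rep_F q h c (n + 1) * \<phi> (n + 1))"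

fun rep_word :: "complex \<Rightarrow> complex \<Rightarrow> complex \<Rightarrow> gen list \<Rightarrow> (int \<Rightarrow> complex) \<Rightarrow> int \<Rightarrow> complex" where
  "rep_word q h c [] \<phi> = \<phi>"
| "rep_word q h c (x # xs) \<phi> = rep_gen q h c x (rep_word q h c xs \<phi>)"

definition rep :: "complex \<Rightarrow> complex \<Rightarrow> complex \<Rightarrow> talg \<Rightarrow> (int \<Rightarrow> complex) \<Rightarrow> int \<Rightarrow> complex" where
  "rep q h c x \<phi> = lin_ext (\<lambda>ws. rep_word q h c ws \<phi>) (Rep_talg x)"

lemma rep_word_linear:
  "rep_word q h c ws (\<lambda>n. d * \<phi> n + \<psi> n) = (\<lambda>n. d * rep_word q h c ws \<phi> n + rep_word q h c ws \<psi> n)"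
proof (induction ws)
  case (Cons x ws)
  then show ?case by (cases x) (simp_all add: algebra_simps)
qed simp

lemma rep_word_zero: "rep_word q h c ws (\<lambda>n. 0) = (\<lambda>n. 0)"
proof (induction ws)
  case (Cons x ws)
  then show ?case by (cases x) simp_all
qed simp

lemma rep_word_append: "rep_word q h c (a @ b) \<phi> = rep_word q h c a (rep_word q h c b \<phi>)"
  by (induction a) auto

lemma rep_add: "rep q h c (x + y) \<phi> = (\<lambda>n. rep q h c x \<phi> n + rep q h c y \<phi> n)"
  unfolding rep_def plus_talg.rep_eq using Rep_talg[of x] Rep_talg[of y] by (simp add: lin_ext_tadd)

lemma rep_smul: "rep q h c (smul d x) \<phi> = (\<lambda>n. d * rep q h c x \<phi> n)"
  unfolding rep_def smul.rep_eq by (rule lin_ext_tsmult)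

lemma rep_zero: "rep q h c 0 \<phi> = (\<lambda>n. 0)"
  using rep_smul[of q h c 0 0 \<phi>] by simp

lemma rep_word: "rep q h c (word ws) \<phi> = rep_word q h c ws \<phi>"
  unfolding rep_def word.rep_eq by (rule lin_ext_tmono)

lemma rep_one: "rep q h c 1 \<phi> = \<phi>"
  using rep_word[of q h c "[]" \<phi>] by (simp add: word_Nil)

lemma rep_mult: "rep q h c (x * y) \<phi> = rep q h c x (rep q h c y \<phi>)"
proof (induction x arbitrary: y rule: talg_induct)
  case zero
  then show ?case by (simp add: rep_zero)
next
  case (add x1 x2)
  then show ?case by (simp add: distrib_right rep_add)
next
  case (word d a)
  have "rep q h c (word a * y) \<phi> = rep_word q h c a (rep q h c y \<phi>)"
  proof (induction y rule: talg_induct)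
    case zero
    then show ?case by (simp add: rep_zero rep_word_zero)
  next
    case (add y1 y2)
    then show ?case
      using rep_word_linear[of q h c a 1] by (simp add: distrib_left rep_add)
  next
    case (word e b)
    then show ?case
      using rep_word_linear[of q h c a e _ "\<lambda>n. 0"]
      by (simp add: rep_smul rep_word rep_word_append rep_word_zero flip: word_append)
  qed
  then show ?case by (simp add: rep_smul rep_word)
qed

lemma rep_sum: "rep q h c (\<Sum>i\<in>S. f i) \<phi> = (\<lambda>n. \<Sum>i\<in>S. rep q h c (f i) \<phi> n)"
  by (induction S rule: infinite_finite_induct) (auto simp: rep_zero rep_add)

section \<open>The Casimir element on polynomials in \<open>v\<^sup>~\<close>\<close>

text \<open>The recursion for the leading coefficients \<open>\<lambda>\<^sub>n\<close>, written in \<open>Q = q\<^sup>2\<close> and \<open>z = Q\<^sup>n\<close>.\<close>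

lemma eigenvalue_step_identity:
  fixes Q z :: "'a :: field"
  assumes "Q \<noteq> 0" and "z \<noteq> 0" and "Q \<noteq> 1"
  shows "(Q * (Q * z) - 1) * (Q * (Q * (Q * z)) - 1) * Q / (Q * (Q * z) * (Q - 1)^2)
    = (Q * z - 1) * (Q * (Q * z) - 1) * Q / (Q * z * (Q - 1)^2)
      + (Q * z - 1) / (Q - 1) / (Q * z) + Q^2 * ((Q * z - 1) / (Q - 1)) + (Q + 1)"
proof -
  have "(Q - 1)^2 \<noteq> 0" using assms by simp
  then show ?thesis
    using assms by (simp add: divide_simps) (simp add: algebra_simps power2_eq_square)
qed

locale casimir_setting =
  fixes q h c :: complex
  assumes generic: "generic_q q"
begin

lemma q_nonzero: "q \<noteq> 0"
  using generic unfolding generic_q_def by auto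

lemma q_power_neq_1: "n > 0 \<Longrightarrow> q ^ n \<noteq> 1"
  using generic unfolding generic_q_def by auto

lemma qsq_neq_1: "q^2 \<noteq> 1"
  using q_power_neq_1[of 2] by simp

lemma qsq_plus_1_nonzero: "q^2 + 1 \<noteq> 0"
proof
  assume "q^2 + 1 = 0"
  then have "q^2 = -1" by (simp add: add_eq_0_iff2)
  moreover have "q ^ 4 = (q^2)^2" by (simp flip: power_mult)
  ultimately have "q ^ 4 = 1" by simp
  then show False using q_power_neq_1[of 4] by simp
qed

definition a :: complex where
  "a = h / (1 - q^2)"

abbreviation vt :: talg where
  "vt \<equiv> vtil q h"

abbreviation cong (infix "\<approx>" 50) where
  "x \<approx> y \<equiv> cong_rel q h c x y"

lemma a_times: "a * (1 - q^2) = h"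
  using qsq_neq_1 by (simp add: a_def)

lemma vt_eq: "vt = word [V] + smul (- a) 1"
  by (simp add: vtil_eq a_def)

lemma U_vt_commute: "word [U] * vt \<approx> smul (inverse (q^2)) (vt * word [U])"
proof -
  have "word [U] * vt - smul (inverse (q^2)) (vt * word [U]) = smul (inverse (q^2)) (rel2_talg q h c)"
  proof (rule talg_eqI)
    fix w
    show "Rep_talg (word [U] * vt - smul (inverse (q^2)) (vt * word [U])) w
        = Rep_talg (smul (inverse (q^2)) (rel2_talg q h c)) w"
      unfolding rel2_talg_eq vt_eq using a_times q_nonzero
      by (simp add: algebra_simps smul_add_right smul_diff_right flip: word_append)
         (simp add: Rep_talg_simps split: if_split, auto simp: field_simps)
  qed
  then show ?thesis
    unfolding cong_rel_def using rel_ideal_smul[OF rel_talg_in_rel_ideal(2)] by simp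
qed

lemma W_vt_commute: "word [W] * vt \<approx> smul (q^2) (vt * word [W])"
proof -
  have "word [W] * vt - smul (q^2) (vt * word [W]) = rel4_talg q h c"
  proof (rule talg_eqI)
    fix w
    show "Rep_talg (word [W] * vt - smul (q^2) (vt * word [W])) w = Rep_talg (rel4_talg q h c) w"
      unfolding rel4_talg_eq vt_eq using a_times q_nonzero
      by (simp add: algebra_simps smul_add_right smul_diff_right flip: word_append)
         (simp add: Rep_talg_simps split: if_split, auto simp: field_simps)
  qed
  then show ?thesis
    unfolding cong_rel_def using rel_talg_in_rel_ideal(4) by simp
qed

text \<open>Solving the first and third relations for \<open>uw\<close> and \<open>wu\<close>.\<close>

definition uw_poly :: "complex poly" where
  "uw_poly = [: (q^2 * c - a^2 + h * a) / (q^2 + 1)^2, (h - 2 * a) / (q^2 + 1)^2, -1 / (q^2 + 1)^2 :]"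

definition wu_poly :: "complex poly" where
  "wu_poly = [: q^2 * (c - q^2 * a^2 - h * a) / (q^2 + 1)^2, - (q^2 * (2 * q^2 * a + h) / (q^2 + 1)^2),
     - (q^4 / (q^2 + 1)^2) :]"

lemma UW_quadratic: "word [U] * word [W] \<approx> peval vt uw_poly"
proof -
  have "word [U] * word [W] - peval vt uw_poly
      = smul (q^2 / (q^2 + 1)^2) (rel1_talg q h c) + smul (1 / (q^2 + 1)^2) (rel3_talg q h c)"
  proof (rule talg_eqI)
    fix w
    show "Rep_talg (word [U] * word [W] - peval vt uw_poly) w
        = Rep_talg (smul (q^2 / (q^2 + 1)^2) (rel1_talg q h c) + smul (1 / (q^2 + 1)^2) (rel3_talg q h c)) w"
      unfolding rel1_talg_eq rel3_talg_eq vt_eq uw_poly_def peval_quadratic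
      using a_times q_nonzero qsq_plus_1_nonzero
      by (simp add: algebra_simps smul_add_right smul_diff_right flip: word_append)
         (simp add: Rep_talg_simps split: if_split,
          intro conjI impI; simp add: field_simps; simp add: eval_nat_numeral algebra_simps)
  qed
  then show ?thesis
    unfolding cong_rel_def
    using rel_ideal_add[OF rel_ideal_smul[OF rel_talg_in_rel_ideal(1)] rel_ideal_smul[OF rel_talg_in_rel_ideal(3)]]
    by simp
qed

lemma WU_quadratic: "word [W] * word [U] \<approx> peval vt wu_poly"
proof -
  have "word [W] * word [U] - peval vt wu_poly
      = smul (q^2 / (q^2 + 1)^2) (rel1_talg q h c) + smul (- (q^2 / (q^2 + 1)^2)) (rel3_talg q h c)"
  proof (rule talg_eqI)
    fix w
    show "Rep_talg (word [W] * word [U] - peval vt wu_poly) w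
        = Rep_talg (smul (q^2 / (q^2 + 1)^2) (rel1_talg q h c) + smul (- (q^2 / (q^2 + 1)^2)) (rel3_talg q h c)) w"
      unfolding rel1_talg_eq rel3_talg_eq vt_eq wu_poly_def peval_quadratic
      using a_times q_nonzero qsq_plus_1_nonzero
      by (simp add: algebra_simps smul_add_right smul_diff_right flip: word_append)
         (simp add: Rep_talg_simps split: if_split,
          intro conjI impI; simp add: field_simps; simp add: eval_nat_numeral algebra_simps)
  qed
  then show ?thesis
    unfolding cong_rel_def
    using rel_ideal_add[OF rel_ideal_smul[OF rel_talg_in_rel_ideal(1)] rel_ideal_smul[OF rel_talg_in_rel_ideal(3)]]
    by simp
qed

sublocale X: twisted_derivation q "genX q" 1
  by unfold_locales (auto simp: q_nonzero fin_supp_genX homog_tens_genX)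

sublocale Y: twisted_derivation q "genY q" "-1"
  by unfold_locales (auto simp: q_nonzero fin_supp_genY homog_tens_genY)

abbreviation Xop :: "talg \<Rightarrow> talg" where
  "Xop \<equiv> der q (genX q)"

abbreviation Yop :: "talg \<Rightarrow> talg" where
  "Yop \<equiv> der q (genY q)"

abbreviation K :: "talg \<Rightarrow> talg" where
  "K \<equiv> casimir q"

definition qsum :: complex where
  "qsum = q + inverse q"

lemma Rep_casimir: "Rep_talg (K x) = actK q (Rep_talg x)"
  unfolding actK_def casimir_def actX_def actY_def actE_def Eop_def der_def
  by (simp add: plus_talg.rep_eq smul.rep_eq X.Rep_lin_op Y.Rep_lin_op diag.Rep_lin_op
      wordX_eq_word_der wordY_eq_word_der) (simp add: diag_def[abs_def])

lemma casimir_add: "K (x + y) = K x + K y"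
  unfolding casimir_def Eop_def
  by (simp add: X.der_add Y.der_add diag.lin_op_add smul_add_right algebra_simps)

lemma casimir_smul: "K (smul d x) = smul d (K x)"
  unfolding casimir_def Eop_def
  by (simp add: X.der_smul Y.der_smul diag.lin_op_smul smul_add_right mult.commute)

lemma casimir_zero: "K 0 = 0"
  using casimir_smul[of 0 0] by simp

lemma casimir_sum: "K (\<Sum>i\<in>S. f i) = (\<Sum>i\<in>S. K (f i))"
  by (induction S rule: infinite_finite_induct) (simp_all add: casimir_zero casimir_add)

lemma casimir_one: "K 1 = 0"
  unfolding casimir_def by (simp add: X.der_one Y.der_one X.der_zero Y.der_zero Eop_homog_0[OF homog_one])

lemma homog_vt: "homog 0 vt"
  unfolding vt_eq by (intro homog_add homog_smul homog_word homog_one) simp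

lemma Xop_gen: "Xop (word [U]) = 0" "Xop (word [V]) = smul (- qsum) (word [U])" "Xop (word [W]) = word [V]"
  by (simp_all add: X.der_gen Abs_talg_tsmult_tmono Abs_talg_tmono Abs_talg_zero qsum_def)

lemma Yop_gen: "Yop (word [U]) = - word [V]" "Yop (word [V]) = smul qsum (word [W])" "Yop (word [W]) = 0"
  by (simp_all add: Y.der_gen Abs_talg_tsmult_tmono Abs_talg_tmono Abs_talg_zero smul_minus_one qsum_def)

lemma Xop_vt: "Xop vt = smul (- qsum) (word [U])"
  unfolding vt_eq by (simp add: X.der_add X.der_smul X.der_one Xop_gen)

lemma Yop_vt: "Yop vt = smul qsum (word [W])"
  unfolding vt_eq by (simp add: Y.der_add Y.der_smul Y.der_one Yop_gen)

lemma Xop_vt_mult: "homog 0 x \<Longrightarrow> Xop (vt * x) = vt * Xop x + smul (- qsum) (word [U] * x)"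
  by (simp add: X.der_mult Eminus_homog[OF homog_vt] Eplus_homog Xop_vt)

lemma Yop_vt_mult: "homog 0 x \<Longrightarrow> Yop (vt * x) = vt * Yop x + smul qsum (word [W] * x)"
  by (simp add: Y.der_mult Eminus_homog[OF homog_vt] Eplus_homog Yop_vt)

lemma casimir_vt_mult:
  assumes x: "homog 0 x"
  shows "K (vt * x) = vt * K x + smul (- qsum) (word [U] * Yop x)
    + smul (qsum * q^2) (word [W] * Xop x) + smul (q * qsum) (word [V] * x)"
proof -
  have hY: "homog (-1) (Yop x)" using Y.homog_der[OF x] by simp
  have hX: "homog 1 (Xop x)" using X.homog_der[OF x] by simp
  have hU: "homog 1 (word [U])" and hW: "homog (-1) (word [W])" by (simp_all add: homog_word)
  have XY: "Xop (Yop (vt * x)) = vt * Xop (Yop x) + smul (- qsum * inverse q) (word [U] * Yop x)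
      + smul (qsum * q) (word [W] * Xop x) + smul qsum (word [V] * x)"
    by (simp add: Yop_vt_mult[OF x] X.der_add X.der_smul X.der_mult Eminus_homog[OF homog_vt] Xop_vt
        Eplus_homog[OF hY] Eminus_homog[OF hW] Xop_gen Eplus_homog[OF x] power_int_minus smul_add_right mult_ac add_ac)
  have YX: "Yop (Xop (vt * x)) = vt * Yop (Xop x) + smul (- qsum * inverse q) (word [U] * Yop x)
      + smul (qsum * q) (word [W] * Xop x) + smul qsum (word [V] * x)"
    by (simp add: Xop_vt_mult[OF x] Y.der_add Y.der_smul Y.der_mult Eminus_homog[OF homog_vt] Yop_vt
        Eplus_homog[OF hX] Eminus_homog[OF hU] Yop_gen Eplus_homog[OF x] smul_minus_one[symmetric]
        smul_add_right mult_ac add_ac)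
  have XY_YX: "Xop (Yop (vt * x)) + Yop (Xop (vt * x)) = vt * (Xop (Yop x) + Yop (Xop x))
      + smul (2 * (- qsum * inverse q)) (word [U] * Yop x) + smul (2 * (qsum * q)) (word [W] * Xop x)
      + smul (2 * qsum) (word [V] * x)"
    unfolding XY YX mult_2 smul_add_left by (simp add: distrib_left add_ac)
  have coeffs: "q / 2 * (2 * (- qsum * inverse q)) = - qsum" "q / 2 * (2 * (qsum * q)) = qsum * q^2"
    "q / 2 * (2 * qsum) = q * qsum"
    using q_nonzero by (simp_all add: field_simps power2_eq_square)
  have "K (vt * x) = smul (q / 2) (Xop (Yop (vt * x)) + Yop (Xop (vt * x)))"
    unfolding casimir_def using Eop_homog_0[OF homog_mult[OF homog_vt x, simplified]] by simp
  also have "\<dots> = smul (q / 2) (vt * (Xop (Yop x) + Yop (Xop x)))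
      + smul (q / 2 * (2 * (- qsum * inverse q))) (word [U] * Yop x)
      + smul (q / 2 * (2 * (qsum * q))) (word [W] * Xop x) + smul (q / 2 * (2 * qsum)) (word [V] * x)"
    unfolding XY_YX by (simp only: smul_add_right smul_smul)
  also have "\<dots> = vt * K x + smul (- qsum) (word [U] * Yop x)
      + smul (qsum * q^2) (word [W] * Xop x) + smul (q * qsum) (word [V] * x)"
    unfolding coeffs casimir_def using Eop_homog_0[OF x] by simp
  finally show ?thesis .
qed

lemma U_vt_power_commute: "word [U] * vt ^ j \<approx> smul (inverse (q^2) ^ j) (vt ^ j * word [U])"
proof (induction j)
  case 0
  show ?case by (simp add: cong_rel_refl)
next
  case (Suc j)
  have "word [U] * vt ^ Suc j = (word [U] * vt) * vt ^ j"
    by (simp add: mult.assoc)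
  also have "\<dots> \<approx> smul (inverse (q^2)) (vt * (word [U] * vt ^ j))"
    using cong_rel_mult_right[OF U_vt_commute] by (simp add: mult.assoc)
  also have "\<dots> \<approx> smul (inverse (q^2)) (vt * smul (inverse (q^2) ^ j) (vt ^ j * word [U]))"
    by (intro cong_rel_smul cong_rel_mult_left Suc.IH)
  also have "\<dots> = smul (inverse (q^2) ^ Suc j) (vt ^ Suc j * word [U])"
    by (simp add: mult.assoc mult_ac)
  finally show ?case .
qed

lemma W_vt_power_commute: "word [W] * vt ^ j \<approx> smul ((q^2) ^ j) (vt ^ j * word [W])"
proof (induction j)
  case 0
  show ?case by (simp add: cong_rel_refl)
next
  case (Suc j)
  have "word [W] * vt ^ Suc j = (word [W] * vt) * vt ^ j"
    by (simp add: mult.assoc)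
  also have "\<dots> \<approx> smul (q^2) (vt * (word [W] * vt ^ j))"
    using cong_rel_mult_right[OF W_vt_commute] by (simp add: mult.assoc)
  also have "\<dots> \<approx> smul (q^2) (vt * smul ((q^2) ^ j) (vt ^ j * word [W]))"
    by (intro cong_rel_smul cong_rel_mult_left Suc.IH)
  also have "\<dots> = smul ((q^2) ^ Suc j) (vt ^ Suc j * word [W])"
    by (simp add: mult.assoc mult_ac)
  finally show ?case .
qed

definition Y_coeff :: "nat \<Rightarrow> complex" where
  "Y_coeff m = qsum * (\<Sum>j<m. (q^2) ^ j)"

definition X_coeff :: "nat \<Rightarrow> complex" where
  "X_coeff m = - qsum * (\<Sum>j<m. inverse (q^2) ^ j)"

lemma Y_coeff_Suc: "Y_coeff (Suc m) = Y_coeff m + qsum * (q^2) ^ m"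
  by (simp add: Y_coeff_def distrib_left)

lemma X_coeff_Suc: "X_coeff (Suc m) = X_coeff m + (- qsum) * inverse (q^2) ^ m"
  by (simp add: X_coeff_def distrib_left)

lemma Yop_vt_power: "Yop (vt ^ Suc m) \<approx> smul (Y_coeff (Suc m)) (vt ^ m * word [W])"
proof (induction m)
  case 0
  show ?case by (simp add: Yop_vt Y_coeff_def cong_rel_refl)
next
  case (Suc m)
  have "Yop (vt ^ Suc (Suc m)) = vt * Yop (vt ^ Suc m) + smul qsum (word [W] * vt ^ Suc m)"
    by (simp only: power_Suc[of vt "Suc m"] Yop_vt_mult[OF homog_power[OF homog_vt]])
  also have "\<dots> \<approx> vt * smul (Y_coeff (Suc m)) (vt ^ m * word [W])
      + smul qsum (smul ((q^2) ^ Suc m) (vt ^ Suc m * word [W]))"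
    by (intro cong_rel_add cong_rel_mult_left cong_rel_smul Suc.IH W_vt_power_commute)
  also have "\<dots> = smul (Y_coeff (Suc (Suc m))) (vt ^ Suc m * word [W])"
    unfolding Y_coeff_Suc[of "Suc m"] smul_add_left smul_smul by (simp add: mult.assoc)
  finally show ?case .
qed

lemma Xop_vt_power: "Xop (vt ^ Suc m) \<approx> smul (X_coeff (Suc m)) (vt ^ m * word [U])"
proof (induction m)
  case 0
  show ?case by (simp add: Xop_vt X_coeff_def cong_rel_refl)
next
  case (Suc m)
  have "Xop (vt ^ Suc (Suc m)) = vt * Xop (vt ^ Suc m) + smul (- qsum) (word [U] * vt ^ Suc m)"
    by (simp only: power_Suc[of vt "Suc m"] Xop_vt_mult[OF homog_power[OF homog_vt]])
  also have "\<dots> \<approx> vt * smul (X_coeff (Suc m)) (vt ^ m * word [U])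
      + smul (- qsum) (smul (inverse (q^2) ^ Suc m) (vt ^ Suc m * word [U]))"
    by (intro cong_rel_add cong_rel_mult_left cong_rel_smul Suc.IH U_vt_power_commute)
  also have "\<dots> = smul (X_coeff (Suc (Suc m))) (vt ^ Suc m * word [U])"
    unfolding X_coeff_Suc[of "Suc m"] smul_add_left smul_smul by (simp add: mult.assoc)
  finally show ?case .
qed

lemma qsq_power_neq_1: "k > 0 \<Longrightarrow> (q^2) ^ k \<noteq> 1"
  using q_power_neq_1[of "2 * k"] by (simp add: power_mult)

lemma inj_qsq_power: "inj (\<lambda>n. (q^2) ^ n)"
proof (rule linorder_injI)
  fix m k :: nat
  assume "m < k"
  then have "(q^2) ^ k = (q^2) ^ m * (q^2) ^ (k - m)"
    by (simp flip: power_add)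
  then show "(q^2) ^ m \<noteq> (q^2) ^ k"
    using qsq_power_neq_1[of "k - m"] \<open>m < k\<close> q_nonzero by auto
qed

lemma q_times_qsum: "q * qsum = q^2 + 1"
  using q_nonzero by (simp add: qsum_def field_simps power2_eq_square)

lemma qsum_sq: "qsum * qsum = (q^2 + 1)^2 / q^2"
  using q_nonzero by (simp add: qsum_def field_simps power2_eq_square)

lemma Y_coeff_eq: "Y_coeff m = qsum * (((q^2) ^ m - 1) / (q^2 - 1))"
  using geometric_sum[of "q^2" m] qsq_neq_1 by (simp add: Y_coeff_def)

lemma lam_eq: "lam q n = ((q^2) ^ n - 1) * ((q^2) ^ Suc n - 1) * q^2 / ((q^2) ^ n * (q^2 - 1)^2)"
proof -
  have "q powi (2 * int n) = q ^ (2 * n)"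
    using power_int_of_nat[of q "2 * n"] by simp
  then have "q powi (2 * int n - 2) = q ^ (2 * n) / q ^ 2"
    using power_int_diff[of q "int (2 * n)" 2] q_nonzero by simp
  then have "q powi (2 * int n - 2) = (q^2) ^ n / q^2"
    by (simp add: power_mult)
  moreover have "q ^ (2 * n) = (q^2) ^ n" "q ^ (2 * (n + 1)) = (q^2) ^ Suc n"
    by (simp_all only: power_mult Suc_eq_plus1)
  ultimately show ?thesis
    using q_nonzero by (simp add: lam_def)
qed

lemma lam_0: "lam q 0 = 0"
  by (simp add: lam_def)

lemma lam_1: "lam q (Suc 0) = q * qsum"
proof -
  define Q where "Q = q^2"
  have Q: "Q \<noteq> 0" "(Q - 1)^2 \<noteq> 0" using q_nonzero qsq_neq_1 by (simp_all add: Q_def)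
  have "lam q (Suc 0) = (Q - 1) * (Q * Q - 1) * Q / (Q * (Q - 1)^2)"
    by (simp add: lam_eq Q_def)
  also have "\<dots> = Q + 1"
    using Q by (simp add: divide_simps) (simp add: algebra_simps power2_eq_square)
  finally have "lam q (Suc 0) = Q + 1" .
  then show ?thesis
    by (simp add: Q_def q_times_qsum)
qed

lemma X_coeff_scaled: "(q^2) ^ n * X_coeff (Suc n) = - Y_coeff (Suc n)"
proof -
  have "(q^2) ^ n * (\<Sum>j<Suc n. inverse (q^2) ^ j) = (\<Sum>j<Suc n. (q^2) ^ (n - j))"
    unfolding sum_distrib_left
    using q_nonzero by (intro sum.cong) (simp_all add: power_diff power_inverse divide_inverse)
  also have "\<dots> = (\<Sum>j<Suc n. (q^2) ^ j)"
    using sum.nat_diff_reindex[of "\<lambda>j. (q^2) ^ j" "Suc n"] by simp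
  finally have "(q^2) ^ n * (\<Sum>j<Suc n. inverse (q^2) ^ j) = (\<Sum>j<Suc n. (q^2) ^ j)" .
  then show ?thesis
    unfolding X_coeff_def Y_coeff_def by (metis mult.left_commute mult_minus_left mult_minus_right)
qed

lemma coeff_uw_poly: "coeff uw_poly 2 = - 1 / (q^2 + 1)^2"
  by (simp add: uw_poly_def numeral_2_eq_2)

lemma coeff_wu_poly: "coeff wu_poly 2 = - (q^4 / (q^2 + 1)^2)"
  by (simp add: wu_poly_def numeral_2_eq_2)

lemma lam_Suc_Suc:
  "lam q (Suc (Suc n)) = lam q (Suc n) + (- qsum) * (Y_coeff (Suc n) * inverse (q^2) ^ n) * coeff uw_poly 2
    + (qsum * q^2) * (X_coeff (Suc n) * (q^2) ^ n) * coeff wu_poly 2 + q * qsum"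
proof -
  define Q where "Q = q^2"
  define z where "z = Q ^ n"
  define g where "g = (Q * z - 1) / (Q - 1)"
  have Q: "Q \<noteq> 0" "Q \<noteq> 1" "(Q + 1)^2 \<noteq> 0"
    using q_nonzero qsq_neq_1 qsq_plus_1_nonzero by (simp_all add: Q_def)
  have z: "z \<noteq> 0" using Q by (simp add: z_def)
  have Y: "Y_coeff (Suc n) = qsum * g"
    by (simp add: Y_coeff_eq g_def z_def Q_def)
  have "(- qsum) * (Y_coeff (Suc n) * inverse (q^2) ^ n) * coeff uw_poly 2
      = (qsum * qsum) * g / (z * (Q + 1)^2)"
    by (simp add: Y coeff_uw_poly z_def Q_def power_inverse field_simps)
  also have "\<dots> = g / (Q * z)"
    using Q z by (simp add: qsum_sq field_simps flip: Q_def)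
  finally have A: "(- qsum) * (Y_coeff (Suc n) * inverse (q^2) ^ n) * coeff uw_poly 2 = g / (Q * z)" .
  have X: "X_coeff (Suc n) * (q^2) ^ n = - (qsum * g)"
    using X_coeff_scaled[of n] Y by (simp add: mult.commute)
  have q4: "q^4 = Q^2"
    by (simp add: Q_def flip: power_mult)
  have "(qsum * q^2) * (X_coeff (Suc n) * (q^2) ^ n) * coeff wu_poly 2
      = (qsum * Q) * (- (qsum * g)) * (- (Q^2 / (Q + 1)^2))"
    unfolding X coeff_wu_poly q4 Q_def ..
  also have "\<dots> = (qsum * qsum) * (Q^3 * g / (Q + 1)^2)"
    by (simp add: power2_eq_square power3_eq_cube mult_ac)
  also have "\<dots> = Q^2 * g"
    using Q by (simp add: qsum_sq divide_simps flip: Q_def) (simp add: algebra_simps power2_eq_square power3_eq_cube)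
  finally have B: "(qsum * q^2) * (X_coeff (Suc n) * (q^2) ^ n) * coeff wu_poly 2 = Q^2 * g" .
  show ?thesis
    unfolding A B q_times_qsum lam_eq
    using eigenvalue_step_identity[OF Q(1) z Q(2)]
    by (simp add: g_def z_def flip: Q_def)
qed

lemma lam_inj: assumes "m < k" shows "lam q m \<noteq> lam q k"
proof
  assume eq: "lam q m = lam q k"
  define Q where "Q = q^2"
  define x where "x = Q ^ m"
  define y where "y = Q ^ k"
  have Q: "Q \<noteq> 0" "Q - 1 \<noteq> 0"
    using q_nonzero qsq_neq_1 by (simp_all add: Q_def)
  have xy: "x \<noteq> 0" "y \<noteq> 0"
    using Q by (simp_all add: x_def y_def)
  have "(x - 1) * (Q * x - 1) * Q / (x * (Q - 1)^2) = (y - 1) * (Q * y - 1) * Q / (y * (Q - 1)^2)"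
    using eq by (simp add: lam_eq x_def y_def flip: Q_def)
  then have "(x - 1) * (Q * x - 1) * y = (y - 1) * (Q * y - 1) * x"
    using Q xy by (simp add: frac_eq_eq mult.assoc)
  then have "(x - y) * (Q * x * y - 1) = 0"
    by (simp add: algebra_simps)
  moreover have "x \<noteq> y"
    using inj_qsq_power assms unfolding x_def y_def Q_def by (auto dest: injD)
  moreover have "Q * x * y \<noteq> 1"
    using qsq_power_neq_1[of "Suc (m + k)"] by (simp add: x_def y_def Q_def power_add mult.assoc)
  ultimately show False
    by simp
qed

lemma degree_uw_poly: "degree uw_poly \<le> 2"
  by (simp add: uw_poly_def)

lemma degree_wu_poly: "degree wu_poly \<le> 2"
  by (simp add: wu_poly_def)

lemma peval_linear: "peval vt [:a, 1:] = word [V]"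
proof -
  have "peval vt [:a, 1:] = word [V] + (smul (- a) 1 + smul a 1)"
    by (simp add: peval_pCons vt_eq add.commute add.left_commute)
  then show ?thesis
    by (simp flip: smul_add_left)
qed

lemma V_vt_power: "word [V] * vt ^ m = peval vt ([:a, 1:] * monom 1 m)"
  by (simp only: peval_mult peval_monom peval_linear smul_one)

lemma U_Yop_vt_power:
  "word [U] * Yop (vt ^ Suc n) \<approx> peval vt (smult (Y_coeff (Suc n) * inverse (q^2) ^ n) (monom 1 n * uw_poly))"
proof -
  have "word [U] * Yop (vt ^ Suc n) \<approx> smul (Y_coeff (Suc n)) ((word [U] * vt ^ n) * word [W])"
    using cong_rel_mult_left[OF Yop_vt_power, of "word [U]"] by (simp add: mult.assoc)
  also have "\<dots> \<approx> smul (Y_coeff (Suc n)) (smul (inverse (q^2) ^ n) (vt ^ n * word [U]) * word [W])"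
    by (intro cong_rel_smul cong_rel_mult_right U_vt_power_commute)
  also have "\<dots> = smul (Y_coeff (Suc n) * inverse (q^2) ^ n) (vt ^ n * (word [U] * word [W]))"
    by (simp add: mult.assoc)
  also have "\<dots> \<approx> smul (Y_coeff (Suc n) * inverse (q^2) ^ n) (vt ^ n * peval vt uw_poly)"
    by (intro cong_rel_smul cong_rel_mult_left UW_quadratic)
  also have "\<dots> = peval vt (smult (Y_coeff (Suc n) * inverse (q^2) ^ n) (monom 1 n * uw_poly))"
    by (simp add: peval_smult peval_mult peval_monom)
  finally show ?thesis .
qed

lemma W_Xop_vt_power:
  "word [W] * Xop (vt ^ Suc n) \<approx> peval vt (smult (X_coeff (Suc n) * (q^2) ^ n) (monom 1 n * wu_poly))"
proof -
  have "word [W] * Xop (vt ^ Suc n) \<approx> smul (X_coeff (Suc n)) ((word [W] * vt ^ n) * word [U])"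
    using cong_rel_mult_left[OF Xop_vt_power, of "word [W]"] by (simp add: mult.assoc)
  also have "\<dots> \<approx> smul (X_coeff (Suc n)) (smul ((q^2) ^ n) (vt ^ n * word [W]) * word [U])"
    by (intro cong_rel_smul cong_rel_mult_right W_vt_power_commute)
  also have "\<dots> = smul (X_coeff (Suc n) * (q^2) ^ n) (vt ^ n * (word [W] * word [U]))"
    by (simp add: mult.assoc)
  also have "\<dots> \<approx> smul (X_coeff (Suc n) * (q^2) ^ n) (vt ^ n * peval vt wu_poly)"
    by (intro cong_rel_smul cong_rel_mult_left WU_quadratic)
  also have "\<dots> = peval vt (smult (X_coeff (Suc n) * (q^2) ^ n) (monom 1 n * wu_poly))"
    by (simp add: peval_smult peval_mult peval_monom)
  finally show ?thesis .
qed

definition casimir_step :: "nat \<Rightarrow> complex poly \<Rightarrow> complex poly" where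
  "casimir_step n p = pCons 0 p
     + smult (- qsum) (smult (Y_coeff (Suc n) * inverse (q^2) ^ n) (monom 1 n * uw_poly))
     + smult (qsum * q^2) (smult (X_coeff (Suc n) * (q^2) ^ n) (monom 1 n * wu_poly))
     + smult (q * qsum) ([:a, 1:] * monom 1 (Suc n))"

lemma casimir_step_cong:
  assumes "K (vt ^ Suc n) \<approx> peval vt p"
  shows "K (vt ^ Suc (Suc n)) \<approx> peval vt (casimir_step n p)"
proof -
  have "K (vt ^ Suc (Suc n)) = vt * K (vt ^ Suc n) + smul (- qsum) (word [U] * Yop (vt ^ Suc n))
      + smul (qsum * q^2) (word [W] * Xop (vt ^ Suc n)) + smul (q * qsum) (word [V] * vt ^ Suc n)"
    by (simp only: power_Suc[of vt "Suc n"] casimir_vt_mult[OF homog_power[OF homog_vt]])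
  also have "\<dots> \<approx> peval vt (casimir_step n p)"
  proof -
    have pCons_0: "peval vt (pCons 0 p) = vt * peval vt p"
      by (simp add: peval_pCons)
    show ?thesis
      unfolding casimir_step_def pCons_0 peval_add peval_smult[of vt "- qsum"] peval_smult[of vt "qsum * q^2"]
        peval_smult[of vt "q * qsum"] V_vt_power[symmetric]
      by (intro cong_rel_add cong_rel_smul cong_rel_mult_left assms U_Yop_vt_power W_Xop_vt_power cong_rel_refl)
  qed
  finally show ?thesis .
qed

lemma degree_casimir_step: "degree p \<le> Suc n \<Longrightarrow> degree (casimir_step n p) \<le> Suc (Suc n)"
  unfolding casimir_step_def
  using degree_mult_le[of "monom 1 n" uw_poly] degree_mult_le[of "monom 1 n" wu_poly]
    degree_mult_le[of "[:a, 1:]" "monom 1 (Suc n)"] degree_monom_le[of "1 :: complex" n]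
    degree_monom_le[of "1 :: complex" "Suc n"] degree_uw_poly degree_wu_poly degree_pCons_le[of 0 p]
  by (intro degree_add_le order_trans[OF degree_smult_le]) auto

lemma coeff_casimir_step:
  assumes "coeff p (Suc n) = lam q (Suc n)"
  shows "coeff (casimir_step n p) (Suc (Suc n)) = lam q (Suc (Suc n))"
proof -
  have "coeff (monom 1 n * r) (Suc (Suc n)) = coeff r 2" for r :: "complex poly"
    by (simp add: coeff_monom_mult numeral_2_eq_2)
  moreover have "coeff ([:a, 1:] * monom 1 (Suc n)) (Suc (Suc n)) = 1"
    by (simp add: mult.commute[of "[:a, 1:]"] coeff_monom_mult)
  ultimately show ?thesis
    using assms by (simp add: casimir_step_def lam_Suc_Suc mult.assoc)
qed

lemma casimir_vt_power:
  "\<exists>p. degree p \<le> m \<and> coeff p m = lam q m \<and> K (vt ^ m) \<approx> peval vt p"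
proof (induction m rule: induct_nat_012)
  case 0
  show ?case by (intro exI[of _ 0]) (simp add: casimir_one lam_0 cong_rel_refl)
next
  case 1
  have "K (vt ^ 1) = smul (q * qsum) (word [V])"
    using casimir_vt_mult[OF homog_one] by (simp add: casimir_one X.der_one Y.der_one)
  then have "K (vt ^ 1) = peval vt (smult (q * qsum) [:a, 1:])"
    by (simp only: peval_smult peval_linear)
  then show ?case
    by (intro exI[of _ "smult (q * qsum) [:a, 1:]"]) (simp add: lam_1 cong_rel_refl)
next
  case (ge2 n)
  then obtain p where p: "degree p \<le> Suc n" "coeff p (Suc n) = lam q (Suc n)" "K (vt ^ Suc n) \<approx> peval vt p"
    by blast
  show ?case
  proof (intro exI conjI)
    show "degree (casimir_step n p) \<le> Suc (Suc n)" using p(1) by (rule degree_casimir_step)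
    show "coeff (casimir_step n p) (Suc (Suc n)) = lam q (Suc (Suc n))" using p(2) by (rule coeff_casimir_step)
    show "K (vt ^ Suc (Suc n)) \<approx> peval vt (casimir_step n p)" using p(3) by (rule casimir_step_cong)
  qed
qed

lemma rep_mu_Suc: "rep_mu q h (n + 1) = q^2 * rep_mu q h n + h"
proof -
  have "q powi (2 * (n + 1)) = q^2 * q powi (2 * n)"
    using q_nonzero by (simp add: distrib_left power_int_add mult.commute)
  then show ?thesis
    using a_times by (simp add: rep_mu_def algebra_simps flip: a_def)
qed

lemma rep_rel1_talg: "rep q h c (rel1_talg q h c) \<phi> = (\<lambda>n. 0)"
proof
  fix n
  let ?m = "rep_mu q h n"
  have "rep q h c (rel1_talg q h c) \<phi> n
      = ((q^2 + 1) * rep_F q h c n + ?m * ?m + (q^2 + 1) / q^2 * rep_F q h c (n + 1) - c) * \<phi> n"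
    by (simp add: rel1_talg_eq rep_add rep_smul rep_word rep_one algebra_simps)
  also have "\<dots> = 0"
    using q_nonzero qsq_plus_1_nonzero unfolding rep_F_def rep_mu_Suc
    by (simp add: field_simps) (simp add: algebra_simps eval_nat_numeral)
  finally show "rep q h c (rel1_talg q h c) \<phi> n = 0" .
qed

lemma rep_rel2_talg: "rep q h c (rel2_talg q h c) \<phi> = (\<lambda>n. 0)"
proof
  fix n
  have "rep q h c (rel2_talg q h c) \<phi> n = (q^2 * rep_mu q h (n - 1) + h - rep_mu q h n) * \<phi> (n - 1)"
    by (simp add: rel2_talg_eq rep_add rep_smul rep_word algebra_simps)
  then show "rep q h c (rel2_talg q h c) \<phi> n = 0"
    using rep_mu_Suc[of "n - 1"] by simp
qed

lemma rep_rel3_talg: "rep q h c (rel3_talg q h c) \<phi> = (\<lambda>n. 0)"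
proof
  fix n
  let ?m = "rep_mu q h n"
  have "rep q h c (rel3_talg q h c) \<phi> n
      = ((q^2 + 1) * (rep_F q h c n - rep_F q h c (n + 1)) + (1 - q^2) * (?m * ?m) - h * ?m) * \<phi> n"
    by (simp add: rel3_talg_eq rep_add rep_smul rep_word algebra_simps)
  also have "\<dots> = 0"
    using q_nonzero qsq_plus_1_nonzero unfolding rep_F_def rep_mu_Suc
    by (simp add: field_simps) (simp add: algebra_simps eval_nat_numeral)
  finally show "rep q h c (rel3_talg q h c) \<phi> n = 0" .
qed

lemma rep_rel4_talg: "rep q h c (rel4_talg q h c) \<phi> = (\<lambda>n. 0)"
proof
  fix n
  have "rep q h c (rel4_talg q h c) \<phi> n
      = rep_F q h c (n + 1) * (rep_mu q h (n + 1) - q^2 * rep_mu q h n - h) * \<phi> (n + 1)"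
    by (simp add: rel4_talg_eq rep_add rep_smul rep_word algebra_simps)
  then show "rep q h c (rel4_talg q h c) \<phi> n = 0"
    using rep_mu_Suc[of n] by simp
qed

lemma rep_ideal: "f \<in> ideal q h c \<Longrightarrow> rep q h c (Abs_talg f) \<phi> = (\<lambda>n. 0)"
proof (induction arbitrary: \<phi> rule: ideal.induct)
  case zero
  show ?case by (simp add: Abs_talg_zero rep_zero)
next
  case (gen r a b)
  then obtain R where R: "R \<in> {rel1_talg q h c, rel2_talg q h c, rel3_talg q h c, rel4_talg q h c}" "r = Rep_talg R"
    by (auto simp: rels_eq)
  then have "rep q h c R \<psi> = (\<lambda>n. 0)" for \<psi>
    by (auto simp: rep_rel1_talg rep_rel2_talg rep_rel3_talg rep_rel4_talg)
  moreover have "Abs_talg (tmul (tmono a) (tmul r (tmono b))) = word a * (R * word b)"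
    by (simp add: R(2) Rep_talg_inverse flip: word.rep_eq times_talg.rep_eq)
  ultimately show ?case
    by (simp add: rep_mult rep_word rep_word_zero)
next
  case (add x y)
  have "Abs_talg (tadd x y) = Abs_talg x + Abs_talg y"
    using fin_supp_ideal[OF add.hyps(1)] fin_supp_ideal[OF add.hyps(2)]
    by (simp add: plus_talg.abs_eq eq_onp_same_args)
  then show ?case using add.IH by (simp add: rep_add)
next
  case (smult x d)
  have "Abs_talg (tsmult d x) = smul d (Abs_talg x)"
    using fin_supp_ideal[OF smult.hyps] by (simp add: smul.abs_eq eq_onp_same_args)
  then show ?case using smult.IH by (simp add: rep_smul)
qed

lemma rep_rel_ideal: "x \<in> rel_ideal q h c \<Longrightarrow> rep q h c x \<phi> = (\<lambda>n. 0)"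
  unfolding rel_ideal_def using rep_ideal[of "Rep_talg x"] by (simp add: Rep_talg_inverse)

lemma rep_vt: "rep q h c vt \<phi> = (\<lambda>n. q powi (2 * n) * \<phi> n)"
  by (simp add: vt_eq rep_add rep_smul rep_word rep_one rep_mu_def a_def algebra_simps)

lemma rep_peval_vt: "rep q h c (peval vt p) \<phi> = (\<lambda>n. poly p (q powi (2 * n)) * \<phi> n)"
proof -
  have "rep q h c (vt ^ i) \<phi> = (\<lambda>n. (q powi (2 * n)) ^ i * \<phi> n)" for i
    by (induction i arbitrary: \<phi>) (simp_all add: rep_one rep_mult rep_vt mult.assoc)
  then show ?thesis
    by (simp add: peval_def poly_altdef rep_sum rep_smul sum_distrib_right mult.assoc)
qed

lemma peval_vt_in_rel_ideal_iff: "peval vt p \<in> rel_ideal q h c \<longleftrightarrow> p = 0"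
proof
  assume "peval vt p \<in> rel_ideal q h c"
  then have "poly p ((q^2) ^ n) = 0" for n :: nat
  proof -
    have "q powi (2 * int n) = (q^2) ^ n"
      using power_int_of_nat[of q "2 * n"] by (simp add: power_mult)
    then show ?thesis
      using fun_cong[OF rep_rel_ideal[OF \<open>peval vt p \<in> rel_ideal q h c\<close>, of "\<lambda>n. 1"], of "int n"]
      by (simp add: rep_peval_vt)
  qed
  then have "range (\<lambda>n. (q^2) ^ n) \<subseteq> {x. poly p x = 0}"
    by auto
  moreover have "infinite (range (\<lambda>n. (q^2) ^ n))"
    using inj_qsq_power by (rule range_inj_infinite)
  ultimately show "p = 0"
    using poly_roots_finite[of p] infinite_super by blast
qed (simp add: rel_ideal_zero)

lemma casimir_powers_congruent:
  obtains \<kappa> :: "nat \<Rightarrow> complex poly"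
  where "\<And>m. degree (\<kappa> m) \<le> m" and "\<And>m. coeff (\<kappa> m) m = lam q m"
    and "\<And>m. K (vt ^ m) \<approx> peval vt (\<kappa> m)"
proof -
  from casimir_vt_power obtain \<kappa> where \<kappa>:
    "\<forall>m. degree (\<kappa> m) \<le> m \<and> coeff (\<kappa> m) m = lam q m \<and> K (vt ^ m) \<approx> peval vt (\<kappa> m)"
    by metis
  then show ?thesis
    using that[of \<kappa>] by blast
qed

lemma Rep_talg_Ppoly: "Rep_talg (\<Sum>j\<le>k. smul (A j) (vt ^ (k - j))) = Ppoly q h k A"
  by (simp add: Ppoly_def Rep_talg_sum smul.rep_eq tsmult_def Rep_talg_power_vtil)

lemma eigen_condition_iff:
  assumes top: "\<And>m. coeff (\<kappa> m) m = lam q m" and cong: "\<And>m. K (vt ^ m) \<approx> peval vt (\<kappa> m)"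
  shows "tadd (actK q (Ppoly q h k A)) (tsmult (- lam q k) (Ppoly q h k A)) \<in> ideal q h c
    \<longleftrightarrow> eigen_residual \<kappa> (lam q k) k A = 0"
proof -
  define P where "P = (\<Sum>j\<le>k. smul (A j) (vt ^ (k - j)))"
  have "tadd (actK q (Ppoly q h k A)) (tsmult (- lam q k) (Ppoly q h k A)) = Rep_talg (K P + smul (- lam q k) P)"
    by (simp add: P_def Rep_talg_Ppoly Rep_casimir plus_talg.rep_eq smul.rep_eq)
  then have "tadd (actK q (Ppoly q h k A)) (tsmult (- lam q k) (Ppoly q h k A)) \<in> ideal q h c
      \<longleftrightarrow> K P + smul (- lam q k) P \<in> rel_ideal q h c"
    by (simp add: rel_ideal_def)
  moreover have "K P + smul (- lam q k) P \<approx> peval vt (eigen_residual \<kappa> (lam q k) k A)"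
  proof -
    have "K P = (\<Sum>j\<le>k. smul (A j) (K (vt ^ (k - j))))"
      by (simp add: P_def casimir_sum casimir_smul)
    also have "\<dots> \<approx> (\<Sum>j\<le>k. smul (A j) (peval vt (\<kappa> (k - j))))"
      by (intro cong_rel_sum cong_rel_smul cong)
    finally have "K P + smul (- lam q k) P \<approx> (\<Sum>j\<le>k. smul (A j) (peval vt (\<kappa> (k - j)))) + smul (- lam q k) P"
      by (rule cong_rel_add) (rule cong_rel_refl)
    also have "\<dots> = peval vt (eigen_residual \<kappa> (lam q k) k A)"
      by (simp add: eigen_residual_def P_def peval_diff peval_sum peval_smult peval_monom smul_minus_left)
    finally show ?thesis .
  qed
  ultimately show ?thesis
    using cong_rel_in_rel_ideal_iff peval_vt_in_rel_ideal_iff by blast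
qed

end

theorem proposition2:
  fixes q h c :: complex and k :: nat
  assumes "generic_q q"
  shows "\<exists>!A :: nat \<Rightarrow> complex. (\<forall>j>k. A j = 0) \<and> A 0 = 1 \<and>
           tadd (actK q (Ppoly q h k A)) (tsmult (- lam q k) (Ppoly q h k A)) \<in> ideal q h c"
proof -
  interpret casimir_setting q h c
    using assms by unfold_locales
  obtain \<kappa> where deg: "\<And>m. degree (\<kappa> m) \<le> m" and top: "\<And>m. coeff (\<kappa> m) m = lam q m"
    and cong: "\<And>m. K (vt ^ m) \<approx> peval vt (\<kappa> m)"
    using casimir_powers_congruent by blast
  interpret triangular \<kappa>
    using deg by unfold_locales
  have "\<exists>!A. (\<forall>j>k. A j = 0) \<and> A 0 = 1 \<and> eigen_residual \<kappa> (lam q k) k A = 0"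
    using eigen_residual_unique_solution[of k] lam_inj by (simp add: top)
  then show ?thesis
    by (simp add: eigen_condition_iff[OF top cong])
qed

end
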